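(* Let $\varphi\equiv\bigwedge_{i=1}^t\varphi_i$ be an $X$-positive basic conjunction of spread $m$ and range $r$ over a graph language $L\cup\{X\}$, and let $C,M\notin L\cup\{X\}$ be distinct unary predicate symbols; let $m_i$ be the spread of $\varphi_i$. Let $\varepsilon_1,\varepsilon_2>0$ be reals. Let $G$ be an $L$-interpretation and $\lambda$ a layering of $\overline G$. For an interval $I$ of consecutive integers let $G_I$ denote the $(L\cup\{C,M\})$-interpretation $G[\lambda^{-1}(I)],\ C:=\lambda^{-1}(M_{2r}(I)),\ M:=\lambda^{-1}(M_r(I))$. For each such $I$ and each $t$-tuple $q$ of non-negative integers, let $A_{I,q}$ be undefined if $G_I,X:=V(\overline{G_I})\not\models\varphi^{(q)}$, and otherwise let $A_{I,q}$ be any set with $G_I,X:=A_{I,q}\models\varphi^{(q)}$ and $|A_{I,q}|\le(1+\varepsilon_1)\gamma_{\varphi^{(q)}}(G_I)$. Let $\ell>2r(1+\max(2/\varepsilon_2,6mt))$ be an integer. For an $(\ell,r)$-cover $R$ of integers and a $t$-tuple $p=(p_1,\dots,p_t)$ where each $p_i$ is an $m_i$-plan for $R$, write $p(I)=(p_1(I),\dots,p_t(I))$, let $A_{R,p}=\bigcup_{I\in R}A_{I,p(I)}$ (undefined if some $A_{I,p(I)}$ is undefined) and $a_{R,p}=\sum_{I\in R}|A_{I,p(I)}|$. Let $A=A_{R,p}$ for a choice of $(R,p)$ minimizing $a_{R,p}$ among those for which $A_{R,p}$ is defined ($A$ undefined if there is no such choice). Then either $G,X:=V(\overline G)\not\models\varphi$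 and $A$ is undefined, or $G,X:=A\models\varphi$ and $|A|\le(1+\varepsilon_1)(1+\varepsilon_2)\gamma_\varphi(G)$.
   Context: A graph language $L$ consists of a binary predicate symbol $e$ and a finite set of unary predicate symbols. An $L$-interpretation $G$ consists of a graph $\overline G$ and a set $S_C\subseteq V(\overline G)$ for each unary $C\in L$; $e$ is interpreted as adjacency in $\overline G$. For $S\subseteq V(\overline G)$, $G[S]$ is the interpretation on $\overline G[S]$ with each unary predicate restricted to $S$; "$H, C:=A, M:=B$" denotes the expansion of $H$ with new unary predicates $C,M$ interpreted as $A,B$, and $H,X:=A\models\theta$ means $\theta$ holds when $X$ is interpreted as $A$. A formula is $X$-positive if every occurrence of $X$ is within the scope of an even number of negations. For an $X$-positive sentence $\theta$ and interpretation $H$, $\gamma_\theta(H)$ is the minimum size of $A\subseteq V(\overline H)$ with $H,X:=A\models\theta$. A layering of a graph is a function $\lambda:V\to\mathbb Z$ with $|\lambda(u)-\lambda(v)|\le1$ on edges. $d(x,y)\le r$ abbreviates $(\exists z_0,\dots,z_r)\,z_0=x\land z_r=y\land\bigwedge_{i=1}^r(z_{i-1}=z_i\lor e(z_{i-1},z_i))$. An $r$-local formula is a formula $\psi$ with one free variable $x$ in which all quantifications are of the form $(\exists y: d(x,y)\le r)$ or $(\forall y: d(x,y)\le r)$. A basic existential sentence is one of the form $(\exists x_1,\dots,x_m)\bigwedge_{1\le i<j\le m}d(x_i,x_j)>2r\land\bigwedge_{i=1}^m\psi(x_i)$, and a basic universal sentence is one of the form $(\forall x_1,\dots,x_{m+1})\bigl(\bigwedge_{1\le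 i<j\le m+1}d(x_i,x_j)>2r\bigr)\Rightarrow\bigvee_{i=1}^{m+1}\psi(x_i)$, where in both cases $\psi$ is $r$-local; $m$ is the spread, $r$ the range and $\psi$ the core. A basic conjunction is a conjunction of basic existential and basic universal sentences; its spread and range are the maxima of those of its conjuncts. For a basic existential/universal $\varphi$ and an integer $k\ge0$, the $(C,M,k)$-variant $\varphi^{(k)}$ is $(\exists x_1,\dots,x_k)\bigwedge_{1\le i<j\le k}d(x_i,x_j)>2r\land\bigwedge_{i=1}^k(C(x_i)\land\psi(x_i))$ if $\varphi$ is basic existential, and $(\forall x_1,\dots,x_{k+1})\bigl(\bigwedge_{i=1}^{k+1}M(x_i)\land\bigwedge_{1\le i<j\le k+1}d(x_i,x_j)>2r\bigr)\Rightarrow\bigvee_{i=1}^{k+1}\psi(x_i)$ if basic universal. For a basic conjunction $\varphi\equiv\bigwedge_{i=1}^t\varphi_i$ and a $t$-tuple $q=(q_1,\dots,q_t)$ of non-negative integers, $\varphi^{(q)}\equiv\bigwedge_{i=1}^t\varphi_i^{(q_i)}$. For integers $\ell\ge 2r+1$ and $n$, the set of all intervals $\{i,i+1,\dots,i+\ell-1\}$ with $i\equiv n\pmod{\ell-2r}$ is an $(\ell,r)$-cover of integers (there are exactly $\ell-2r$ distinct ones). For an integer $d\ge0$ and $I=\{i,\dots,i+\ell-1\}$ in a cover, $M_d(I)=\{i+d,\dots,i+\ell-d-1\}$. An $m$-plan for a cover $R$ is a function $p:R\to\mathbb Z_{\ge0}$ with $\sum_{I\in R}p(I)=m$. *)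

theory Defs
  imports Complex_Main
begin

text \<open>An interpretation: a vertex set, an adjacency relation and an interpretation
of every unary predicate symbol (symbols of type 'p).  Only the symbols in the
language matter.\<close>

record ('v, 'p) interp =
  verts :: "'v set"
  adj :: "'v \<Rightarrow> 'v \<Rightarrow> bool"
  upred :: "'p \<Rightarrow> 'v set"

definition L_interp :: "'p set \<Rightarrow> ('v, 'p) interp \<Rightarrow> bool" where
  "L_interp L G \<longleftrightarrow> finite (verts G)
     \<and> (\<forall>u v. adj G u v \<longrightarrow> u \<in> verts G \<and> v \<in> verts G)
     \<and> (\<forall>u v. adj G u v \<longrightarrow> adj G v u)
     \<and> (\<forall>u. \<not> adj G u u)
     \<and> (\<forall>P\<in>L. upred G P \<subseteq> verts G)"

definition expand :: "('v, 'p) interp \<Rightarrow> 'p \<Rightarrow> 'v set \<Rightarrow> ('v, 'p) interp" where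
  "expand H P A = H\<lparr>upred := (upred H)(P := A)\<rparr>"

definition restrict :: "('v, 'p) interp \<Rightarrow> 'v set \<Rightarrow> ('v, 'p) interp" where
  "restrict G S = \<lparr>verts = verts G \<inter> S,
                   adj = (\<lambda>u v. adj G u v \<and> u \<in> S \<and> v \<in> S),
                   upred = (\<lambda>P. upred G P \<inter> S)\<rparr>"

text \<open>Variables are natural numbers.  The atom Dist k a b is the formula abbreviated
by d(a,b) <= k in the paper; its semantics below is literally the unfolding of the
abbreviation.\<close>

datatype 'p fm =
    TT | FF
  | Eq nat nat
  | Edge nat nat
  | Pred 'p nat
  | Dist nat nat nat
  | Neg "'p fm"
  | Conj "'p fm" "'p fm"
  | Disj "'p fm" "'p fm"
  | Imp "'p fm" "'p fm"
  | Ex nat "'p fm"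
  | All nat "'p fm"

fun sat :: "('v, 'p) interp \<Rightarrow> (nat \<Rightarrow> 'v) \<Rightarrow> 'p fm \<Rightarrow> bool" where
  "sat G \<nu> TT = True"
| "sat G \<nu> FF = False"
| "sat G \<nu> (Eq a b) = (\<nu> a = \<nu> b)"
| "sat G \<nu> (Edge a b) = adj G (\<nu> a) (\<nu> b)"
| "sat G \<nu> (Pred P a) = (\<nu> a \<in> upred G P)"
| "sat G \<nu> (Dist k a b) =
     (\<exists>zs. length zs = Suc k \<and> set zs \<subseteq> verts G \<and> zs ! 0 = \<nu> a \<and> zs ! k = \<nu> b
        \<and> (\<forall>i\<in>{1..k}. zs ! (i - 1) = zs ! i \<or> adj G (zs ! (i - 1)) (zs ! i)))"
| "sat G \<nu> (Neg \<phi>) = (\<not> sat G \<nu> \<phi>)"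
| "sat G \<nu> (Conj \<phi> \<psi>) = (sat G \<nu> \<phi> \<and> sat G \<nu> \<psi>)"
| "sat G \<nu> (Disj \<phi> \<psi>) = (sat G \<nu> \<phi> \<or> sat G \<nu> \<psi>)"
| "sat G \<nu> (Imp \<phi> \<psi>) = (sat G \<nu> \<phi> \<longrightarrow> sat G \<nu> \<psi>)"
| "sat G \<nu> (Ex y \<phi>) = (\<exists>v\<in>verts G. sat G (\<nu>(y := v)) \<phi>)"
| "sat G \<nu> (All y \<phi>) = (\<forall>v\<in>verts G. sat G (\<nu>(y := v)) \<phi>)"

text \<open>Truth of a sentence (for sentences the valuation is irrelevant).\<close>
definition models :: "('v, 'p) interp \<Rightarrow> 'p fm \<Rightarrow> bool" where
  "models G \<phi> \<longleftrightarrow> (\<forall>\<nu>. sat G \<nu> \<phi>)"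

fun fv :: "'p fm \<Rightarrow> nat set" where
  "fv TT = {}" | "fv FF = {}"
| "fv (Eq a b) = {a, b}" | "fv (Edge a b) = {a, b}" | "fv (Pred P a) = {a}"
| "fv (Dist k a b) = {a, b}"
| "fv (Neg \<phi>) = fv \<phi>"
| "fv (Conj \<phi> \<psi>) = fv \<phi> \<union> fv \<psi>" | "fv (Disj \<phi> \<psi>) = fv \<phi> \<union> fv \<psi>"
| "fv (Imp \<phi> \<psi>) = fv \<phi> \<union> fv \<psi>"
| "fv (Ex y \<phi>) = fv \<phi> - {y}" | "fv (All y \<phi>) = fv \<phi> - {y}"

fun maxvar :: "'p fm \<Rightarrow> nat" where
  "maxvar TT = 0" | "maxvar FF = 0"
| "maxvar (Eq a b) = max a b" | "maxvar (Edge a b) = max a b" | "maxvar (Pred P a) = a"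
| "maxvar (Dist k a b) = max a b"
| "maxvar (Neg \<phi>) = maxvar \<phi>"
| "maxvar (Conj \<phi> \<psi>) = max (maxvar \<phi>) (maxvar \<psi>)"
| "maxvar (Disj \<phi> \<psi>) = max (maxvar \<phi>) (maxvar \<psi>)"
| "maxvar (Imp \<phi> \<psi>) = max (maxvar \<phi>) (maxvar \<psi>)"
| "maxvar (Ex y \<phi>) = max y (maxvar \<phi>)" | "maxvar (All y \<phi>) = max y (maxvar \<phi>)"

fun preds :: "'p fm \<Rightarrow> 'p set" where
  "preds (Pred P a) = {P}"
| "preds (Neg \<phi>) = preds \<phi>"
| "preds (Conj \<phi> \<psi>) = preds \<phi> \<union> preds \<psi>" | "preds (Disj \<phi> \<psi>) = preds \<phi> \<union> preds \<psi>"
| "preds (Imp \<phi> \<psi>) = preds \<phi> \<union> preds \<psi>"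
| "preds (Ex y \<phi>) = preds \<phi>" | "preds (All y \<phi>) = preds \<phi>"
| "preds _ = {}"

text \<open>Polarity: xpos X phi holds iff every occurrence of X in phi lies in the
scope of an even number of negations (the antecedent of an implication counts
as negated, since A --> B abbreviates (not A) or B); xneg: odd number.\<close>
fun xpos :: "'p \<Rightarrow> 'p fm \<Rightarrow> bool" and xneg :: "'p \<Rightarrow> 'p fm \<Rightarrow> bool" where
  "xpos X (Pred P a) = True"
| "xpos X (Neg \<phi>) = xneg X \<phi>"
| "xpos X (Conj \<phi> \<psi>) = (xpos X \<phi> \<and> xpos X \<psi>)"
| "xpos X (Disj \<phi> \<psi>) = (xpos X \<phi> \<and> xpos X \<psi>)"
| "xpos X (Imp \<phi> \<psi>) = (xneg X \<phi> \<and> xpos X \<psi>)"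
| "xpos X (Ex y \<phi>) = xpos X \<phi>"
| "xpos X (All y \<phi>) = xpos X \<phi>"
| "xpos X _ = True"
| "xneg X (Pred P a) = (P \<noteq> X)"
| "xneg X (Neg \<phi>) = xpos X \<phi>"
| "xneg X (Conj \<phi> \<psi>) = (xneg X \<phi> \<and> xneg X \<psi>)"
| "xneg X (Disj \<phi> \<psi>) = (xneg X \<phi> \<and> xneg X \<psi>)"
| "xneg X (Imp \<phi> \<psi>) = (xpos X \<phi> \<and> xneg X \<psi>)"
| "xneg X (Ex y \<phi>) = xneg X \<phi>"
| "xneg X (All y \<phi>) = xneg X \<phi>"
| "xneg X _ = True"

definition X_positive :: "'p \<Rightarrow> 'p fm \<Rightarrow> bool" where
  "X_positive X \<phi> \<longleftrightarrow> xpos X \<phi>"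

text \<open>Renaming of free variable a into a variable b (used with b not occurring in
the formula, so no capture).\<close>
fun rn :: "nat \<Rightarrow> nat \<Rightarrow> 'p fm \<Rightarrow> 'p fm" where
  "rn a b (Eq u v) = Eq (if u = a then b else u) (if v = a then b else v)"
| "rn a b (Edge u v) = Edge (if u = a then b else u) (if v = a then b else v)"
| "rn a b (Pred P u) = Pred P (if u = a then b else u)"
| "rn a b (Dist k u v) = Dist k (if u = a then b else u) (if v = a then b else v)"
| "rn a b (Neg \<phi>) = Neg (rn a b \<phi>)"
| "rn a b (Conj \<phi> \<psi>) = Conj (rn a b \<phi>) (rn a b \<psi>)"
| "rn a b (Disj \<phi> \<psi>) = Disj (rn a b \<phi>) (rn a b \<psi>)"
| "rn a b (Imp \<phi> \<psi>) = Imp (rn a b \<phi>) (rn a b \<psi>)"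
| "rn a b (Ex y \<phi>) = (if y = a then Ex y \<phi> else Ex y (rn a b \<phi>))"
| "rn a b (All y \<phi>) = (if y = a then All y \<phi> else All y (rn a b \<phi>))"
| "rn a b TT = TT" | "rn a b FF = FF"

definition conj_list :: "'p fm list \<Rightarrow> 'p fm" where
  "conj_list fs = foldr Conj fs TT"
definition disj_list :: "'p fm list \<Rightarrow> 'p fm" where
  "disj_list fs = foldr Disj fs FF"
definition Exs :: "nat list \<Rightarrow> 'p fm \<Rightarrow> 'p fm" where
  "Exs vs \<phi> = foldr Ex vs \<phi>"
definition Alls :: "nat list \<Rightarrow> 'p fm \<Rightarrow> 'p fm" where
  "Alls vs \<phi> = foldr All vs \<phi>"

text \<open>r-local formulas with distinguished variable x: every quantification has the
form (Ex y: d(x,y) <= r) or (All y: d(x,y) <= r), i.e.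
Ex y (d(x,y) <= r /\ theta) resp. All y (d(x,y) <= r --> theta), with y distinct from x;
distance atoms only occur as such guards.\<close>
fun local_fm :: "nat \<Rightarrow> nat \<Rightarrow> 'p fm \<Rightarrow> bool" where
  "local_fm r x (Ex y (Conj (Dist k a b) \<theta>)) =
     (k = r \<and> a = x \<and> b = y \<and> y \<noteq> x \<and> local_fm r x \<theta>)"
| "local_fm r x (Ex y \<phi>) = False"
| "local_fm r x (All y (Imp (Dist k a b) \<theta>)) =
     (k = r \<and> a = x \<and> b = y \<and> y \<noteq> x \<and> local_fm r x \<theta>)"
| "local_fm r x (All y \<phi>) = False"
| "local_fm r x (Dist k a b) = False"
| "local_fm r x (Neg \<phi>) = local_fm r x \<phi>"
| "local_fm r x (Conj \<phi> \<psi>) = (local_fm r x \<phi> \<and> local_fm r x \<psi>)"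
| "local_fm r x (Disj \<phi> \<psi>) = (local_fm r x \<phi> \<and> local_fm r x \<psi>)"
| "local_fm r x (Imp \<phi> \<psi>) = (local_fm r x \<phi> \<and> local_fm r x \<psi>)"
| "local_fm r x TT = True" | "local_fm r x FF = True"
| "local_fm r x (Eq a b) = True" | "local_fm r x (Edge a b) = True"
| "local_fm r x (Pred P a) = True"

text \<open>A basic sentence: BEx m r x psi (basic existential) or BAll m r x psi (basic
universal) with spread m, range r and core psi, an r-local formula in the free
variable x.\<close>
datatype 'p basic = BEx nat nat nat "'p fm" | BAll nat nat nat "'p fm"

fun b_spread :: "'p basic \<Rightarrow> nat" where
  "b_spread (BEx m r x \<psi>) = m" | "b_spread (BAll m r x \<psi>) = m"
fun b_range :: "'p basic \<Rightarrow> nat" where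
  "b_range (BEx m r x \<psi>) = r" | "b_range (BAll m r x \<psi>) = r"
fun b_core :: "'p basic \<Rightarrow> 'p fm" where
  "b_core (BEx m r x \<psi>) = \<psi>" | "b_core (BAll m r x \<psi>) = \<psi>"
fun b_var :: "'p basic \<Rightarrow> nat" where
  "b_var (BEx m r x \<psi>) = x" | "b_var (BAll m r x \<psi>) = x"

definition wf_basic :: "'p basic \<Rightarrow> bool" where
  "wf_basic b \<longleftrightarrow> local_fm (b_range b) (b_var b) (b_core b) \<and> fv (b_core b) \<subseteq> {b_var b}"

definition fresh_vars :: "nat \<Rightarrow> 'p fm \<Rightarrow> nat \<Rightarrow> nat list" where
  "fresh_vars x \<psi> k = [Suc (max x (maxvar \<psi>)) ..< Suc (max x (maxvar \<psi>)) + k]"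

definition far_apart :: "nat \<Rightarrow> nat list \<Rightarrow> 'p fm" where
  "far_apart r vs = conj_list
     [Neg (Dist (2 * r) (vs ! i) (vs ! j)). i \<leftarrow> [0..<length vs], j \<leftarrow> [Suc i..<length vs]]"

fun basic_fm :: "'p basic \<Rightarrow> 'p fm" where
  "basic_fm (BEx m r x \<psi>) = (let vs = fresh_vars x \<psi> m in
      Exs vs (Conj (far_apart r vs) (conj_list (map (\<lambda>v. rn x v \<psi>) vs))))"
| "basic_fm (BAll m r x \<psi>) = (let vs = fresh_vars x \<psi> (Suc m) in
      Alls vs (Imp (far_apart r vs) (disj_list (map (\<lambda>v. rn x v \<psi>) vs))))"

fun variant :: "'p \<Rightarrow> 'p \<Rightarrow> nat \<Rightarrow> 'p basic \<Rightarrow> 'p fm" where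
  "variant C M k (BEx m r x \<psi>) = (let vs = fresh_vars x \<psi> k in
      Exs vs (Conj (far_apart r vs) (conj_list (map (\<lambda>v. Conj (Pred C v) (rn x v \<psi>)) vs))))"
| "variant C M k (BAll m r x \<psi>) = (let vs = fresh_vars x \<psi> (Suc k) in
      Alls vs (Imp (Conj (conj_list (map (Pred M) vs)) (far_apart r vs))
                   (disj_list (map (\<lambda>v. rn x v \<psi>) vs))))"

definition bconj_fm :: "'p basic list \<Rightarrow> 'p fm" where
  "bconj_fm bs = conj_list (map basic_fm bs)"
definition bconj_spread :: "'p basic list \<Rightarrow> nat" where
  "bconj_spread bs = foldr max (map b_spread bs) 0"
definition bconj_range :: "'p basic list \<Rightarrow> nat" where
  "bconj_range bs = foldr max (map b_range bs) 0"
definition bconj_variant :: "'p \<Rightarrow> 'p \<Rightarrow> 'p basic list \<Rightarrow> nat list \<Rightarrow> 'p fm" where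
  "bconj_variant C M bs q = conj_list (map2 (variant C M) q bs)"

definition gamma :: "('v, 'p) interp \<Rightarrow> 'p \<Rightarrow> 'p fm \<Rightarrow> nat" where
  "gamma H X \<theta> = (LEAST k. \<exists>A\<subseteq>verts H. card A = k \<and> models (expand H X A) \<theta>)"

definition layering :: "('v, 'p) interp \<Rightarrow> ('v \<Rightarrow> int) \<Rightarrow> bool" where
  "layering G lam \<longleftrightarrow> (\<forall>u v. adj G u v \<longrightarrow> \<bar>lam u - lam v\<bar> \<le> 1)"

definition layer_pre :: "('v, 'p) interp \<Rightarrow> ('v \<Rightarrow> int) \<Rightarrow> int set \<Rightarrow> 'v set" where
  "layer_pre G lam J = {v \<in> verts G. lam v \<in> J}"

definition mid :: "nat \<Rightarrow> int set \<Rightarrow> int set" where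
  "mid d I = {Min I + int d .. Max I - int d}"

definition G_sub :: "('v, 'p) interp \<Rightarrow> ('v \<Rightarrow> int) \<Rightarrow> nat \<Rightarrow> 'p \<Rightarrow> 'p \<Rightarrow> int set
                      \<Rightarrow> ('v, 'p) interp" where
  "G_sub G lam r C M I =
     expand (expand (restrict G (layer_pre G lam I)) C (layer_pre G lam (mid (2 * r) I)))
            M (layer_pre G lam (mid r I))"

definition ivl :: "int \<Rightarrow> int \<Rightarrow> int set" where
  "ivl i l = {i .. i + l - 1}"

definition cover :: "int \<Rightarrow> nat \<Rightarrow> int \<Rightarrow> int set set" where
  "cover l r n = {ivl i l | i. i mod (l - 2 * int r) = n mod (l - 2 * int r)}"

definition is_cover :: "int \<Rightarrow> nat \<Rightarrow> int set set \<Rightarrow> bool" where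
  "is_cover l r R \<longleftrightarrow> (\<exists>n. R = cover l r n)"

text \<open>m-plan: non-negative integer values on R summing to m (so only finitely many
are nonzero; the sum is taken over the finite support).\<close>
definition plan :: "int set set \<Rightarrow> nat \<Rightarrow> (int set \<Rightarrow> nat) \<Rightarrow> bool" where
  "plan R m p \<longleftrightarrow> finite {I \<in> R. p I \<noteq> 0} \<and> (\<Sum>I\<in>{I \<in> R. p I \<noteq> 0}. p I) = m"

text \<open>A_{R,p}, a_{R,p} for a selection Asel of the sets A_{I,q} (None = undefined).\<close>
definition A_Rp :: "(int set \<Rightarrow> nat list \<Rightarrow> 'v set option) \<Rightarrow> int set set
                    \<Rightarrow> (int set \<Rightarrow> nat) list \<Rightarrow> 'v set" where
  "A_Rp Asel R ps = (\<Union>I\<in>R. the (Asel I (map (\<lambda>f. f I) ps)))"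

text \<open>Sum over I in R of |A_{I,p(I)}| (taken over the terms that are nonzero).\<close>
definition a_Rp :: "(int set \<Rightarrow> nat list \<Rightarrow> 'v set option) \<Rightarrow> int set set
                    \<Rightarrow> (int set \<Rightarrow> nat) list \<Rightarrow> nat" where
  "a_Rp Asel R ps = (\<Sum>I\<in>{I \<in> R. card (the (Asel I (map (\<lambda>f. f I) ps))) \<noteq> 0}.
                        card (the (Asel I (map (\<lambda>f. f I) ps))))"

definition admissible :: "(int set \<Rightarrow> nat list \<Rightarrow> 'v set option) \<Rightarrow> int \<Rightarrow> nat
                          \<Rightarrow> 'p basic list \<Rightarrow> (int set set \<times> (int set \<Rightarrow> nat) list) set" where
  "admissible Asel l r bs = {(R, ps). is_cover l r R \<and> length ps = length bs
       \<and> (\<forall>i<length bs. plan R (b_spread (bs ! i)) (ps ! i))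
       \<and> (\<forall>I\<in>R. Asel I (map (\<lambda>f. f I) ps) \<noteq> None)}"

end

theory Submission
  imports Defs
begin

text \<open>
  An admissible choice (R, p) glues to a solution. For a basic existential, the
  witnesses of the variants with spread p(I) lie in the M_2r-parts of distinct intervals of one
  cover, which are more than 2r layers apart, so together they are m scattered witnesses in G.
  For a basic universal, m + 1 scattered counterexamples in G would, by pigeonhole over the
  plan, put more than p(I) of them into the M_r-part of some I, contradicting the variant in
  G_I. In both cases cores are evaluated alike in G and in G_I, since an r-local formula at a
  vertex of M_r(I) only sees layers inside I.

  Take an optimal solution D and for every conjunct a witness set: the m centres
  of a basic existential, or a largest 2r-scattered set of core failures of a basic universal.
  Call a cover good if all witnesses lie at least 3r deep inside the M_r-parts of their
  intervals; at most 6rmt of the l - 2r covers are bad. For a good cover, charging each witness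
  to its interval gives plans for which D restricted to the layers of I solves every variant in
  G_I, so a_{R,p} \<le> (1 + \<epsilon>1) \<Sum>_I |D \<inter> \<lambda>\<inverse>(I)|. Summed over all covers every layer is counted l
  times, and at least once per cover; averaging over the good covers, which are at least half of them,
  gives one with \<Sum>_I |D \<inter> \<lambda>\<inverse>(I)| \<le> (1 + \<epsilon>2)|D|.
\<close>

section \<open>Walks and distance\<close>

definition dist_le :: "('v, 'p) interp \<Rightarrow> nat \<Rightarrow> 'v \<Rightarrow> 'v \<Rightarrow> bool" where
  "dist_le G k a b \<longleftrightarrow> (\<exists>zs. length zs = Suc k \<and> set zs \<subseteq> verts G \<and> zs ! 0 = a \<and> zs ! k = b
        \<and> (\<forall>i\<in>{1..k}. zs ! (i - 1) = zs ! i \<or> adj G (zs ! (i - 1)) (zs ! i)))"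

lemma sat_Dist: "sat G \<nu> (Dist k a b) = dist_le G k (\<nu> a) (\<nu> b)"
  by (simp add: dist_le_def)

lemma dist_le_refl: "a \<in> verts G \<Longrightarrow> dist_le G k a a"
  unfolding dist_le_def by (rule exI[of _ "replicate (Suc k) a"]) (auto simp: nth_Cons')

lemma dist_le_verts: "dist_le G k a b \<Longrightarrow> a \<in> verts G \<and> b \<in> verts G"
  unfolding dist_le_def by (auto dest!: nth_mem)

lemma dist_le_sym:
  assumes "symp (adj G)" "dist_le G k a b"
  shows "dist_le G k b a"
proof -
  obtain zs where z: "length zs = Suc k" "set zs \<subseteq> verts G" "zs ! 0 = a" "zs ! k = b"
    "\<forall>i\<in>{1..k}. zs ! (i - 1) = zs ! i \<or> adj G (zs ! (i - 1)) (zs ! i)"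
    using assms(2) unfolding dist_le_def by blast
  have "rev zs ! (i - 1) = rev zs ! i \<or> adj G (rev zs ! (i - 1)) (rev zs ! i)" if i: "i \<in> {1..k}" for i
  proof -
    have "rev zs ! (i - 1) = zs ! (k - i + 1)" "rev zs ! i = zs ! (k - i)"
      using z(1) i by (auto simp: rev_nth Suc_diff_le)
    moreover have "k - i + 1 \<in> {1..k}" using i by auto
    ultimately show ?thesis using z(5) assms(1) by (fastforce dest: sympD)
  qed
  then show ?thesis
    unfolding dist_le_def using z by (intro exI[of _ "rev zs"]) (auto simp: rev_nth)
qed

lemma dist_le_subgraph:
  assumes "verts H \<subseteq> verts G" "\<forall>u v. adj H u v \<longrightarrow> adj G u v" "dist_le H k a b"
  shows "dist_le G k a b"
  using assms unfolding dist_le_def by blast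

lemma walk_layer_bound:
  assumes "layering G lam" "length zs = Suc k" "zs ! 0 = a"
    "\<forall>i\<in>{1..k}. zs ! (i - 1) = zs ! i \<or> adj G (zs ! (i - 1)) (zs ! i)"
  shows "i \<le> k \<Longrightarrow> \<bar>lam (zs ! i) - lam a\<bar> \<le> int i"
proof (induction i)
  case 0 then show ?case using assms by simp
next
  case (Suc i)
  have "zs ! i = zs ! Suc i \<or> adj G (zs ! i) (zs ! Suc i)"
    using assms(4) Suc.prems by (metis atLeastAtMost_iff diff_Suc_1 le_add1 plus_1_eq_Suc)
  then have "\<bar>lam (zs ! Suc i) - lam (zs ! i)\<bar> \<le> 1"
    using assms(1) unfolding layering_def by (metis abs_minus_commute abs_zero diff_self zero_le_one)
  then show ?case using Suc by auto
qed

lemma dist_le_layer_bound: "layering G lam \<Longrightarrow> dist_le G k a b \<Longrightarrow> \<bar>lam a - lam b\<bar> \<le> int k"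
  unfolding dist_le_def using walk_layer_bound[of G lam _ k a k]
  by (metis abs_minus_commute order_refl)

text \<open>A walk of length at most k from a never leaves the layers within k of a, so it survives
  restriction to any superset of those layers.\<close>

lemma dist_le_restrict:
  assumes "layering G lam" "verts H = verts G \<inter> S"
    "\<forall>u w. adj H u w \<longleftrightarrow> adj G u w \<and> u \<in> S \<and> w \<in> S"
    "\<forall>w\<in>verts G. \<bar>lam w - lam a\<bar> \<le> int k \<longrightarrow> w \<in> S"
    "dist_le G k a b"
  shows "dist_le H k a b"
proof -
  obtain zs where z: "length zs = Suc k" "set zs \<subseteq> verts G" "zs ! 0 = a" "zs ! k = b"
    "\<forall>i\<in>{1..k}. zs ! (i - 1) = zs ! i \<or> adj G (zs ! (i - 1)) (zs ! i)"
    using assms(5) unfolding dist_le_def by blast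
  have inS: "i \<le> k \<Longrightarrow> zs ! i \<in> S" for i
    using walk_layer_bound[OF assms(1) z(1) z(3) z(5), of i] assms(4) z(1,2)
    by (metis le_imp_less_Suc nth_mem order_trans subsetD of_nat_mono)
  have "set zs \<subseteq> S" using inS z(1) by (auto simp: in_set_conv_nth)
  then show ?thesis
    unfolding dist_le_def using z assms(2,3) inS
    by (intro exI[of _ zs]) (auto dest!: bspec[OF z(5)])
qed

lemma sat_cong_fv: "(\<forall>z\<in>fv \<phi>. \<nu> z = \<nu>' z) \<Longrightarrow> sat G \<nu> \<phi> = sat G \<nu>' \<phi>"
proof (induction \<phi> arbitrary: \<nu> \<nu>')
  case (Ex y \<phi>)
  have "\<And>v. sat G (\<nu>(y := v)) \<phi> = sat G (\<nu>'(y := v)) \<phi>"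
    by (rule Ex.IH) (use Ex.prems in auto)
  then show ?case by simp
next
  case (All y \<phi>)
  have "\<And>v. sat G (\<nu>(y := v)) \<phi> = sat G (\<nu>'(y := v)) \<phi>"
    by (rule All.IH) (use All.prems in auto)
  then show ?case by simp
next
  case (Neg \<phi>) then show ?case by fastforce
next
  case (Conj \<phi>1 \<phi>2)
  have "sat G \<nu> \<phi>1 = sat G \<nu>' \<phi>1" "sat G \<nu> \<phi>2 = sat G \<nu>' \<phi>2"
    using Conj.IH Conj.prems by auto
  then show ?case by simp
next
  case (Disj \<phi>1 \<phi>2)
  have "sat G \<nu> \<phi>1 = sat G \<nu>' \<phi>1" "sat G \<nu> \<phi>2 = sat G \<nu>' \<phi>2"
    using Disj.IH Disj.prems by auto
  then show ?case by simp
next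
  case (Imp \<phi>1 \<phi>2)
  have "sat G \<nu> \<phi>1 = sat G \<nu>' \<phi>1" "sat G \<nu> \<phi>2 = sat G \<nu>' \<phi>2"
    using Imp.IH Imp.prems by auto
  then show ?case by simp
qed (auto simp: sat_Dist)

lemma sat_rn: "maxvar \<psi> < v \<Longrightarrow> x < v \<Longrightarrow> sat G \<nu> (rn x v \<psi>) = sat G (\<nu>(x := \<nu> v)) \<psi>"
proof (induction \<psi> arbitrary: \<nu>)
  case (Ex y \<phi>)
  show ?case
  proof (cases "y = x")
    case True
    have "rn x v (Ex y \<phi>) = Ex y \<phi>" using True by simp
    moreover have "sat G \<nu> (Ex y \<phi>) = sat G (\<nu>(x := \<nu> v)) (Ex y \<phi>)"
      by (rule sat_cong_fv) (use True in auto)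
    ultimately show ?thesis by metis
  next
    case False
    have "\<And>w. sat G (\<nu>(y := w)) (rn x v \<phi>) = sat G ((\<nu>(x := \<nu> v))(y := w)) \<phi>"
    proof -
      fix w
      have "sat G (\<nu>(y := w)) (rn x v \<phi>) = sat G ((\<nu>(y := w))(x := (\<nu>(y := w)) v)) \<phi>"
        by (rule Ex.IH) (use Ex.prems in auto)
      also have "(\<nu>(y := w))(x := (\<nu>(y := w)) v) = (\<nu>(x := \<nu> v))(y := w)"
        using False Ex.prems by (auto simp: fun_eq_iff)
      finally show "sat G (\<nu>(y := w)) (rn x v \<phi>) = sat G ((\<nu>(x := \<nu> v))(y := w)) \<phi>" .
    qed
    then show ?thesis using False by (simp del: fun_upd_apply)
  qed
next
  case (All y \<phi>)
  show ?case
  proof (cases "y = x")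
    case True
    have "rn x v (All y \<phi>) = All y \<phi>" using True by simp
    moreover have "sat G \<nu> (All y \<phi>) = sat G (\<nu>(x := \<nu> v)) (All y \<phi>)"
      by (rule sat_cong_fv) (use True in auto)
    ultimately show ?thesis by metis
  next
    case False
    have "\<And>w. sat G (\<nu>(y := w)) (rn x v \<phi>) = sat G ((\<nu>(x := \<nu> v))(y := w)) \<phi>"
    proof -
      fix w
      have "sat G (\<nu>(y := w)) (rn x v \<phi>) = sat G ((\<nu>(y := w))(x := (\<nu>(y := w)) v)) \<phi>"
        by (rule All.IH) (use All.prems in auto)
      also have "(\<nu>(y := w))(x := (\<nu>(y := w)) v) = (\<nu>(x := \<nu> v))(y := w)"
        using False All.prems by (auto simp: fun_eq_iff)
      finally show "sat G (\<nu>(y := w)) (rn x v \<phi>) = sat G ((\<nu>(x := \<nu> v))(y := w)) \<phi>" .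
    qed
    then show ?thesis using False by (simp del: fun_upd_apply)
  qed
qed (auto simp: dist_le_def)

lemma preds_rn: "preds (rn x v \<psi>) = preds \<psi>"
  by (induction \<psi>) auto

lemma xpos_xneg_rn: "(xpos X (rn x v \<psi>) = xpos X \<psi>) \<and> (xneg X (rn x v \<psi>) = xneg X \<psi>)"
  by (induction \<psi>) auto

lemma verts_expand [simp]: "verts (expand H P A) = verts H"
  and adj_expand [simp]: "adj (expand H P A) = adj H"
  and upred_expand [simp]: "upred (expand H P A) Q = (if Q = P then A else upred H Q)"
  by (auto simp: expand_def)

lemma dist_le_expand [simp]: "dist_le (expand H P A) k a b = dist_le H k a b"
  by (simp add: dist_le_def)

lemma sat_expand_mono_polarity:
  assumes "A \<subseteq> B"
  shows "(xpos X \<phi> \<longrightarrow> (\<forall>\<nu>. sat (expand H X A) \<nu> \<phi> \<longrightarrow> sat (expand H X B) \<nu> \<phi>))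
       \<and> (xneg X \<phi> \<longrightarrow> (\<forall>\<nu>. sat (expand H X B) \<nu> \<phi> \<longrightarrow> sat (expand H X A) \<nu> \<phi>))"
proof (induction \<phi>)
  case (Pred P a) then show ?case using assms by auto
next
  case (Neg \<phi>) then show ?case by fastforce
next
  case (Conj \<phi>1 \<phi>2) then show ?case by fastforce
next
  case (Disj \<phi>1 \<phi>2) then show ?case by fastforce
next
  case (Imp \<phi>1 \<phi>2) then show ?case by fastforce
next
  case (Ex y \<phi>) then show ?case by fastforce
next
  case (All y \<phi>) then show ?case by fastforce
qed (simp_all add: sat_Dist)

lemma sat_expand_mono:
  "xpos X \<phi> \<Longrightarrow> A \<subseteq> B \<Longrightarrow> sat (expand H X A) \<nu> \<phi> \<Longrightarrow> sat (expand H X B) \<nu> \<phi>"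
  using sat_expand_mono_polarity[of A B X \<phi> H] by blast

lemma sat_conj_list: "sat G \<nu> (conj_list fs) = (\<forall>f\<in>set fs. sat G \<nu> f)"
  by (induct fs) (auto simp: conj_list_def)

lemma sat_disj_list: "sat G \<nu> (disj_list fs) = (\<exists>f\<in>set fs. sat G \<nu> f)"
  by (induct fs) (auto simp: disj_list_def)

lemma xpos_conj_list: "xpos X (conj_list fs) = (\<forall>f\<in>set fs. xpos X f)"
  by (induction fs) (auto simp: conj_list_def)

lemma xpos_disj_list: "xpos X (disj_list fs) = (\<forall>f\<in>set fs. xpos X f)"
  by (induction fs) (auto simp: disj_list_def)

lemma xpos_Exs: "xpos X (Exs vs \<phi>) = xpos X \<phi>"
  by (induction vs) (auto simp: Exs_def)

lemma xpos_Alls: "xpos X (Alls vs \<phi>) = xpos X \<phi>"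
  by (induction vs) (auto simp: Alls_def)

lemma preds_conj_list: "preds (conj_list fs) = (\<Union>f\<in>set fs. preds f)"
  by (induction fs) (auto simp: conj_list_def)

lemma preds_disj_list: "preds (disj_list fs) = (\<Union>f\<in>set fs. preds f)"
  by (induction fs) (auto simp: disj_list_def)

lemma preds_Exs: "preds (Exs vs \<phi>) = preds \<phi>"
  by (induction vs) (auto simp: Exs_def)

lemma preds_Alls: "preds (Alls vs \<phi>) = preds \<phi>"
  by (induction vs) (auto simp: Alls_def)

lemma models_conj_list: "models G (conj_list fs) = (\<forall>f\<in>set fs. models G f)"
  unfolding models_def sat_conj_list by blast

lemma models_bconj_fm: "models G (bconj_fm bs) = (\<forall>b\<in>set bs. models G (basic_fm b))"
  unfolding bconj_fm_def models_conj_list by simp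

lemma models_bconj_variant:
  assumes "length q = length bs"
  shows "models G (bconj_variant C M bs q) = (\<forall>k<length bs. models G (variant C M (q ! k) (bs ! k)))"
proof -
  have "set (map2 (variant C M) q bs) = (\<lambda>k. variant C M (q ! k) (bs ! k)) ` {..<length bs}"
    using assms by (auto simp: set_zip image_iff)
  then show ?thesis unfolding bconj_variant_def models_conj_list by auto
qed

section \<open>Basic sentences as statements about scattered sets\<close>

fun upd_list :: "(nat \<Rightarrow> 'v) \<Rightarrow> nat list \<Rightarrow> 'v list \<Rightarrow> nat \<Rightarrow> 'v" where
  "upd_list \<nu> (v # vs) (w # ws) = upd_list (\<nu>(v := w)) vs ws"
| "upd_list \<nu> _ _ = \<nu>"

lemma sat_Exs: "sat G \<nu> (Exs vs \<phi>) =
   (\<exists>ws. length ws = length vs \<and> set ws \<subseteq> verts G \<and> sat G (upd_list \<nu> vs ws) \<phi>)"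
proof (induction vs arbitrary: \<nu>)
  case Nil then show ?case by (simp add: Exs_def)
next
  case (Cons v vs)
  have "sat G \<nu> (Exs (v # vs) \<phi>) = (\<exists>w\<in>verts G. sat G (\<nu>(v := w)) (Exs vs \<phi>))"
    by (simp add: Exs_def)
  also have "\<dots> = (\<exists>w\<in>verts G. \<exists>ws. length ws = length vs \<and> set ws \<subseteq> verts G
                      \<and> sat G (upd_list (\<nu>(v := w)) vs ws) \<phi>)"
    by (simp only: Cons.IH)
  also have "\<dots> = (\<exists>ws. length ws = length (v # vs) \<and> set ws \<subseteq> verts G \<and> sat G (upd_list \<nu> (v # vs) ws) \<phi>)"
  proof
    assume "\<exists>w\<in>verts G. \<exists>ws. length ws = length vs \<and> set ws \<subseteq> verts G \<and> sat G (upd_list (\<nu>(v := w)) vs ws) \<phi>"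
    then obtain w ws where "w \<in> verts G" "length ws = length vs" "set ws \<subseteq> verts G"
      "sat G (upd_list (\<nu>(v := w)) vs ws) \<phi>" by blast
    then show "\<exists>ws. length ws = length (v # vs) \<and> set ws \<subseteq> verts G \<and> sat G (upd_list \<nu> (v # vs) ws) \<phi>"
      by (intro exI[of _ "w # ws"]) auto
  next
    assume "\<exists>ws. length ws = length (v # vs) \<and> set ws \<subseteq> verts G \<and> sat G (upd_list \<nu> (v # vs) ws) \<phi>"
    then obtain ws where ws: "length ws = length (v # vs)" "set ws \<subseteq> verts G" "sat G (upd_list \<nu> (v # vs) ws) \<phi>"
      by blast
    then obtain y ys where "ws = y # ys" by (cases ws) auto
    then show "\<exists>w\<in>verts G. \<exists>ws. length ws = length vs \<and> set ws \<subseteq> verts G \<and> sat G (upd_list (\<nu>(v := w)) vs ws) \<phi>"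
      using ws by auto
  qed
  finally show ?case .
qed

lemma sat_Alls: "sat G \<nu> (Alls vs \<phi>) =
   (\<forall>ws. length ws = length vs \<and> set ws \<subseteq> verts G \<longrightarrow> sat G (upd_list \<nu> vs ws) \<phi>)"
proof (induction vs arbitrary: \<nu>)
  case Nil then show ?case by (simp add: Alls_def)
next
  case (Cons v vs)
  have "sat G \<nu> (Alls (v # vs) \<phi>) = (\<forall>w\<in>verts G. sat G (\<nu>(v := w)) (Alls vs \<phi>))"
    by (simp add: Alls_def)
  also have "\<dots> = (\<forall>w\<in>verts G. \<forall>ws. length ws = length vs \<and> set ws \<subseteq> verts G
                      \<longrightarrow> sat G (upd_list (\<nu>(v := w)) vs ws) \<phi>)"
    by (simp only: Cons.IH)
  also have "\<dots> = (\<forall>ws. length ws = length (v # vs) \<and> set ws \<subseteq> verts G \<longrightarrow> sat G (upd_list \<nu> (v # vs) ws) \<phi>)"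
  proof
    assume A: "\<forall>w\<in>verts G. \<forall>ws. length ws = length vs \<and> set ws \<subseteq> verts G \<longrightarrow> sat G (upd_list (\<nu>(v := w)) vs ws) \<phi>"
    show "\<forall>ws. length ws = length (v # vs) \<and> set ws \<subseteq> verts G \<longrightarrow> sat G (upd_list \<nu> (v # vs) ws) \<phi>"
    proof (intro allI impI)
      fix ws assume ws: "length ws = length (v # vs) \<and> set ws \<subseteq> verts G"
      then obtain y ys where "ws = y # ys" by (cases ws) auto
      then show "sat G (upd_list \<nu> (v # vs) ws) \<phi>" using ws A by auto
    qed
  next
    assume A: "\<forall>ws. length ws = length (v # vs) \<and> set ws \<subseteq> verts G \<longrightarrow> sat G (upd_list \<nu> (v # vs) ws) \<phi>"
    show "\<forall>w\<in>verts G. \<forall>ws. length ws = length vs \<and> set ws \<subseteq> verts G \<longrightarrow> sat G (upd_list (\<nu>(v := w)) vs ws) \<phi>"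
    proof (intro ballI allI impI)
      fix w ws assume "w \<in> verts G" "length ws = length vs \<and> set ws \<subseteq> verts G"
      then show "sat G (upd_list (\<nu>(v := w)) vs ws) \<phi>" using A[rule_format, of "w # ws"] by auto
    qed
  qed
  finally show ?case .
qed

lemma map_upd_list: "distinct vs \<Longrightarrow> length ws = length vs \<Longrightarrow> map (upd_list \<nu> vs ws) vs = ws"
proof (induction vs arbitrary: \<nu> ws)
  case Nil then show ?case by simp
next
  case (Cons v vs)
  then obtain w ws' where ws: "ws = w # ws'" by (cases ws) auto
  have other: "z \<notin> set us \<Longrightarrow> upd_list \<mu> us xs z = \<mu> z" for z us xs and \<mu> :: "nat \<Rightarrow> 'a"
    by (induction \<mu> us xs rule: upd_list.induct) auto
  show ?case using Cons ws other[of v vs "\<nu>(v := w)" ws'] by simp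
qed

lemma upd_list_nth:
  "distinct vs \<Longrightarrow> length ws = length vs \<Longrightarrow> i < length vs \<Longrightarrow> upd_list \<nu> vs ws (vs ! i) = ws ! i"
  using map_upd_list by (metis nth_map)

definition scattered :: "('v, 'p) interp \<Rightarrow> nat \<Rightarrow> 'v set \<Rightarrow> bool" where
  "scattered G d W \<longleftrightarrow> (\<forall>u\<in>W. \<forall>w\<in>W. u \<noteq> w \<longrightarrow> \<not> dist_le G d u w)"

definition scattered_list :: "('v, 'p) interp \<Rightarrow> nat \<Rightarrow> 'v list \<Rightarrow> bool" where
  "scattered_list G d ws \<longleftrightarrow> (\<forall>i j. i < j \<longrightarrow> j < length ws \<longrightarrow> \<not> dist_le G d (ws ! i) (ws ! j))"

lemma scattered_subset: "scattered G d W \<Longrightarrow> W' \<subseteq> W \<Longrightarrow> scattered G d W'"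
  unfolding scattered_def by blast

lemma scattered_expand [simp]: "scattered (expand H P A) d W = scattered H d W"
  by (simp add: scattered_def)

lemma sat_far_apart: "sat G \<nu> (far_apart r vs) =
   (\<forall>i j. i < j \<longrightarrow> j < length vs \<longrightarrow> \<not> dist_le G (2 * r) (\<nu> (vs ! i)) (\<nu> (vs ! j)))"
proof -
  define xs :: "'b fm list" where "xs = [Neg (Dist (2 * r) (vs ! i) (vs ! j)). i \<leftarrow> [0..<length vs], j \<leftarrow> [Suc i..<length vs]]"
  have mem: "Neg (Dist (2 * r) (vs ! i) (vs ! j)) \<in> set xs" if "i < j" "j < length vs" for i j
  proof -
    have "i \<in> set [0..<length vs]" "j \<in> set [Suc i..<length vs]" using that by auto
    then show ?thesis unfolding xs_def set_concat set_map image_image UN_iff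
      by (intro bexI[of _ i]) auto
  qed
  have mem2: "\<exists>i j. i < j \<and> j < length vs \<and> f = Neg (Dist (2 * r) (vs ! i) (vs ! j))" if "f \<in> set xs" for f
  proof -
    from that have "\<exists>i\<in>set [0..<length vs]. \<exists>j\<in>set [Suc i..<length vs]. f = Neg (Dist (2 * r) (vs ! i) (vs ! j))"
      unfolding xs_def set_concat set_map image_image UN_iff image_iff .
    then obtain i j where "i \<in> set [0..<length vs]" "j \<in> set [Suc i..<length vs]"
      "f = Neg (Dist (2 * r) (vs ! i) (vs ! j))" by blast
    then show ?thesis by (intro exI[of _ i] exI[of _ j]) simp
  qed
  have "sat G \<nu> (far_apart r vs) = (\<forall>f\<in>set xs. sat G \<nu> f)"
    unfolding far_apart_def sat_conj_list xs_def ..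
  also have "\<dots> = (\<forall>i j. i < j \<longrightarrow> j < length vs \<longrightarrow> sat G \<nu> (Neg (Dist (2 * r) (vs ! i) (vs ! j))))"
    using mem mem2 by blast
  also have "\<dots> = (\<forall>i j. i < j \<longrightarrow> j < length vs \<longrightarrow> \<not> dist_le G (2 * r) (\<nu> (vs ! i)) (\<nu> (vs ! j)))"
    by (simp only: sat.simps(7) sat_Dist)
  finally show ?thesis .
qed

definition holds_at :: "('v, 'p) interp \<Rightarrow> 'p fm \<Rightarrow> 'v \<Rightarrow> bool" where
  "holds_at G \<psi> w = sat G (\<lambda>_. w) \<psi>"

lemma fresh_vars_props:
  "distinct (fresh_vars x \<psi> k)" "length (fresh_vars x \<psi> k) = k"
  "v \<in> set (fresh_vars x \<psi> k) \<Longrightarrow> maxvar \<psi> < v \<and> x < v"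
  by (auto simp: fresh_vars_def simp del: upt_Suc)

lemma sat_fresh_tuple:
  assumes "fv \<psi> \<subseteq> {x}" "length ws = k"
  defines "vs \<equiv> fresh_vars x \<psi> k"
  shows "sat G (upd_list \<nu> vs ws) (far_apart r vs) = scattered_list G (2 * r) ws"
    and "v \<in> set vs \<Longrightarrow> sat G (upd_list \<nu> vs ws) (rn x v \<psi>) = holds_at G \<psi> (upd_list \<nu> vs ws v)"
    and "upd_list \<nu> vs ws ` set vs = set ws"
proof -
  have vs: "distinct vs" "length ws = length vs"
    using assms(2) unfolding vs_def by (simp_all add: fresh_vars_props)
  show "sat G (upd_list \<nu> vs ws) (far_apart r vs) = scattered_list G (2 * r) ws"
    unfolding sat_far_apart scattered_list_def using upd_list_nth[OF vs] vs(2) by auto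
  show "upd_list \<nu> vs ws ` set vs = set ws" using map_upd_list[OF vs] by (metis list.set_map)
  assume "v \<in> set vs"
  then have "maxvar \<psi> < v" "x < v" using fresh_vars_props(3) unfolding vs_def by auto
  then have "sat G (upd_list \<nu> vs ws) (rn x v \<psi>) = sat G ((upd_list \<nu> vs ws)(x := upd_list \<nu> vs ws v)) \<psi>"
    by (rule sat_rn)
  also have "\<dots> = holds_at G \<psi> (upd_list \<nu> vs ws v)"
    unfolding holds_at_def by (rule sat_cong_fv) (use assms(1) in auto)
  finally show "sat G (upd_list \<nu> vs ws) (rn x v \<psi>) = holds_at G \<psi> (upd_list \<nu> vs ws v)" .
qed

lemma sat_basic_BEx:
  assumes "fv \<psi> \<subseteq> {x}"
  shows "sat G \<nu> (basic_fm (BEx m r x \<psi>)) =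
    (\<exists>ws. length ws = m \<and> set ws \<subseteq> verts G \<and> scattered_list G (2 * r) ws \<and> (\<forall>w\<in>set ws. holds_at G \<psi> w))"
proof -
  define vs where "vs = fresh_vars x \<psi> (m)"
  have len: "length vs = m" unfolding vs_def by (rule fresh_vars_props(2))
  have "sat G \<nu> (basic_fm (BEx m r x \<psi>)) = (\<exists>ws. length ws = m \<and> set ws \<subseteq> verts G \<and>
      sat G (upd_list \<nu> vs ws) (far_apart r vs) \<and> (\<forall>v\<in>set vs. sat G (upd_list \<nu> vs ws) (rn x v \<psi>)))"
    by (simp add: vs_def[symmetric] len sat_Exs sat_conj_list)
  also have "\<dots> = (\<exists>ws. length ws = m \<and> set ws \<subseteq> verts G \<and> scattered_list G (2 * r) ws
      \<and> (\<forall>w\<in>set ws. holds_at G \<psi> w))" (is "(\<exists>ws. ?P ws) = (\<exists>ws. ?Q ws)")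
  proof -
    have "?P ws = ?Q ws" for ws
    proof (cases "length ws = m")
      case True
      note tuple = sat_fresh_tuple[OF assms True, where \<nu> = \<nu>, folded vs_def]
      show ?thesis using tuple(1) tuple(2) tuple(3)[symmetric] True by auto
    qed simp
    then show ?thesis by simp
  qed
  finally show ?thesis .
qed

lemma sat_basic_BAll:
  assumes "fv \<psi> \<subseteq> {x}"
  shows "sat G \<nu> (basic_fm (BAll m r x \<psi>)) =
    (\<forall>ws. length ws = Suc m \<and> set ws \<subseteq> verts G \<and> scattered_list G (2 * r) ws \<longrightarrow> (\<exists>w\<in>set ws. holds_at G \<psi> w))"
proof -
  define vs where "vs = fresh_vars x \<psi> (Suc m)"
  have len: "length vs = Suc m" unfolding vs_def by (rule fresh_vars_props(2))
  have "sat G \<nu> (basic_fm (BAll m r x \<psi>)) = (\<forall>ws. length ws = Suc m \<and> set ws \<subseteq> verts G \<longrightarrow>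
      sat G (upd_list \<nu> vs ws) (far_apart r vs) \<longrightarrow> (\<exists>v\<in>set vs. sat G (upd_list \<nu> vs ws) (rn x v \<psi>)))"
    by (simp add: vs_def[symmetric] len sat_Alls sat_disj_list)
  also have "\<dots> = (\<forall>ws. length ws = Suc m \<and> set ws \<subseteq> verts G \<and> scattered_list G (2 * r) ws
      \<longrightarrow> (\<exists>w\<in>set ws. holds_at G \<psi> w))" (is "(\<forall>ws. ?P ws) = (\<forall>ws. ?Q ws)")
  proof -
    have "?P ws = ?Q ws" for ws
    proof (cases "length ws = Suc m")
      case True
      note tuple = sat_fresh_tuple[OF assms True, where \<nu> = \<nu>, folded vs_def]
      show ?thesis using tuple(1) tuple(2) tuple(3)[symmetric] True by auto
    qed simp
    then show ?thesis by simp
  qed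
  finally show ?thesis .
qed

lemma sat_variant_BEx:
  assumes "fv \<psi> \<subseteq> {x}"
  shows "sat G \<nu> (variant C M k (BEx m r x \<psi>)) =
    (\<exists>ws. length ws = k \<and> set ws \<subseteq> verts G \<and> scattered_list G (2 * r) ws \<and> (\<forall>w\<in>set ws. w \<in> upred G C \<and> holds_at G \<psi> w))"
proof -
  define vs where "vs = fresh_vars x \<psi> (k)"
  have len: "length vs = k" unfolding vs_def by (rule fresh_vars_props(2))
  have "sat G \<nu> (variant C M k (BEx m r x \<psi>)) = (\<exists>ws. length ws = k \<and> set ws \<subseteq> verts G \<and>
      sat G (upd_list \<nu> vs ws) (far_apart r vs) \<and> (\<forall>v\<in>set vs. upd_list \<nu> vs ws v \<in> upred G C \<and> sat G (upd_list \<nu> vs ws) (rn x v \<psi>)))"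
    by (simp add: vs_def[symmetric] len sat_Exs sat_conj_list)
  also have "\<dots> = (\<exists>ws. length ws = k \<and> set ws \<subseteq> verts G \<and> scattered_list G (2 * r) ws
      \<and> (\<forall>w\<in>set ws. w \<in> upred G C \<and> holds_at G \<psi> w))" (is "(\<exists>ws. ?P ws) = (\<exists>ws. ?Q ws)")
  proof -
    have "?P ws = ?Q ws" for ws
    proof (cases "length ws = k")
      case True
      note tuple = sat_fresh_tuple[OF assms True, where \<nu> = \<nu>, folded vs_def]
      show ?thesis using tuple(1) tuple(2) tuple(3)[symmetric] True by auto
    qed simp
    then show ?thesis by simp
  qed
  finally show ?thesis .
qed

lemma sat_variant_BAll:
  assumes "fv \<psi> \<subseteq> {x}"
  shows "sat G \<nu> (variant C M k (BAll m r x \<psi>)) =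
    (\<forall>ws. length ws = Suc k \<and> set ws \<subseteq> verts G \<and> scattered_list G (2 * r) ws \<and> (\<forall>w\<in>set ws. w \<in> upred G M) \<longrightarrow> (\<exists>w\<in>set ws. holds_at G \<psi> w))"
proof -
  define vs where "vs = fresh_vars x \<psi> (Suc k)"
  have len: "length vs = Suc k" unfolding vs_def by (rule fresh_vars_props(2))
  have "sat G \<nu> (variant C M k (BAll m r x \<psi>)) = (\<forall>ws. length ws = Suc k \<and> set ws \<subseteq> verts G \<longrightarrow>
      (\<forall>v\<in>set vs. upd_list \<nu> vs ws v \<in> upred G M) \<and> sat G (upd_list \<nu> vs ws) (far_apart r vs) \<longrightarrow> (\<exists>v\<in>set vs. sat G (upd_list \<nu> vs ws) (rn x v \<psi>)))"
    by (simp add: vs_def[symmetric] len sat_Alls sat_disj_list sat_conj_list)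
  also have "\<dots> = (\<forall>ws. length ws = Suc k \<and> set ws \<subseteq> verts G \<and> scattered_list G (2 * r) ws
      \<and> (\<forall>w\<in>set ws. w \<in> upred G M) \<longrightarrow> (\<exists>w\<in>set ws. holds_at G \<psi> w))" (is "(\<forall>ws. ?P ws) = (\<forall>ws. ?Q ws)")
  proof -
    have "?P ws = ?Q ws" for ws
    proof (cases "length ws = Suc k")
      case True
      note tuple = sat_fresh_tuple[OF assms True, where \<nu> = \<nu>, folded vs_def]
      show ?thesis using tuple(1) tuple(2) tuple(3)[symmetric] True by auto
    qed simp
    then show ?thesis by simp
  qed
  finally show ?thesis .
qed

lemma scattered_list_distinct_scattered:
  assumes "symp (adj G)" "set ws \<subseteq> verts G" "scattered_list G d ws"
  shows "distinct ws" "scattered G d (set ws)"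
proof -
  have far: "\<not> dist_le G d (ws ! i) (ws ! j)" if "i < length ws" "j < length ws" "i \<noteq> j" for i j
    using assms(3) that dist_le_sym[OF assms(1)] unfolding scattered_list_def
    by (metis linorder_neqE_nat)
  show "distinct ws"
    unfolding distinct_conv_nth using far assms(2) dist_le_refl by (metis nth_mem subsetD)
  then show "scattered G d (set ws)"
    unfolding scattered_def using far by (metis in_set_conv_nth)
qed

lemma scattered_list_of_scattered:
  assumes "finite W" "scattered G d W"
  obtains ws where "set ws = W" "length ws = card W" "scattered_list G d ws"
proof -
  obtain ws where ws: "set ws = W" "distinct ws" using finite_distinct_list[OF assms(1)] by blast
  have "scattered_list G d ws"
    unfolding scattered_list_def
  proof (intro allI impI)
    fix i j assume "i < j" "j < length ws"
    then have "ws ! i \<noteq> ws ! j" "ws ! i \<in> W" "ws ! j \<in> W"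
      using ws by (auto simp: nth_eq_iff_index_eq)
    then show "\<not> dist_le G d (ws ! i) (ws ! j)" using assms(2) unfolding scattered_def by blast
  qed
  then show thesis using that ws distinct_card by metis
qed

lemma ex_scattered_list_iff:
  assumes "symp (adj G)"
  shows "(\<exists>ws. length ws = k \<and> set ws \<subseteq> verts G \<and> scattered_list G d ws \<and> (\<forall>w\<in>set ws. Q w))
     \<longleftrightarrow> (\<exists>W\<subseteq>verts G. finite W \<and> card W = k \<and> scattered G d W \<and> (\<forall>w\<in>W. Q w))"
proof
  assume "\<exists>ws. length ws = k \<and> set ws \<subseteq> verts G \<and> scattered_list G d ws \<and> (\<forall>w\<in>set ws. Q w)"
  then obtain ws where ws: "length ws = k" "set ws \<subseteq> verts G" "scattered_list G d ws" "\<forall>w\<in>set ws. Q w"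
    by blast
  note set_ws = scattered_list_distinct_scattered[OF assms ws(2,3)]
  show "\<exists>W\<subseteq>verts G. finite W \<and> card W = k \<and> scattered G d W \<and> (\<forall>w\<in>W. Q w)"
    using ws set_ws distinct_card[OF set_ws(1)] by (intro exI[of _ "set ws"]) auto
next
  assume "\<exists>W\<subseteq>verts G. finite W \<and> card W = k \<and> scattered G d W \<and> (\<forall>w\<in>W. Q w)"
  then obtain W where "W \<subseteq> verts G" "finite W" "card W = k" "scattered G d W" "\<forall>w\<in>W. Q w"
    by blast
  then show "\<exists>ws. length ws = k \<and> set ws \<subseteq> verts G \<and> scattered_list G d ws \<and> (\<forall>w\<in>set ws. Q w)"
    by (metis scattered_list_of_scattered)
qed

lemma models_basic_BEx:
  assumes "fv \<psi> \<subseteq> {x}" "symp (adj G)"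
  shows "models G (basic_fm (BEx m r x \<psi>)) \<longleftrightarrow>
    (\<exists>W\<subseteq>verts G. finite W \<and> card W = m \<and> scattered G (2 * r) W \<and> (\<forall>w\<in>W. holds_at G \<psi> w))"
  unfolding models_def sat_basic_BEx[OF assms(1)] ex_scattered_list_iff[OF assms(2)] by simp

lemma models_basic_BAll:
  assumes "fv \<psi> \<subseteq> {x}" "symp (adj G)"
  shows "models G (basic_fm (BAll m r x \<psi>)) \<longleftrightarrow>
    \<not> (\<exists>W\<subseteq>verts G. finite W \<and> card W = Suc m \<and> scattered G (2 * r) W \<and> (\<forall>w\<in>W. \<not> holds_at G \<psi> w))"
  unfolding models_def sat_basic_BAll[OF assms(1)]
  using ex_scattered_list_iff[OF assms(2), of "Suc m" "2 * r" "\<lambda>w. \<not> holds_at G \<psi> w"] by blast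

lemma models_variant_BEx:
  assumes "fv \<psi> \<subseteq> {x}" "symp (adj G)"
  shows "models G (variant C M k (BEx m r x \<psi>)) \<longleftrightarrow>
    (\<exists>W\<subseteq>verts G. finite W \<and> card W = k \<and> scattered G (2 * r) W
       \<and> (\<forall>w\<in>W. w \<in> upred G C \<and> holds_at G \<psi> w))"
  unfolding models_def sat_variant_BEx[OF assms(1)] ex_scattered_list_iff[OF assms(2)] by simp

lemma models_variant_BAll:
  assumes "fv \<psi> \<subseteq> {x}" "symp (adj G)"
  shows "models G (variant C M k (BAll m r x \<psi>)) \<longleftrightarrow>
    \<not> (\<exists>W\<subseteq>verts G. finite W \<and> card W = Suc k \<and> scattered G (2 * r) W
         \<and> (\<forall>w\<in>W. w \<in> upred G M \<and> \<not> holds_at G \<psi> w))"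
  unfolding models_def sat_variant_BAll[OF assms(1)]
  using ex_scattered_list_iff[OF assms(2), of "Suc k" "2 * r" "\<lambda>w. w \<in> upred G M \<and> \<not> holds_at G \<psi> w"]
  by blast

lemma maximum_scattered_near:
  assumes "symp (adj G)" "finite S" "S \<subseteq> verts G" "scattered G d S" "\<forall>s\<in>S. Q s"
    and "\<forall>W\<subseteq>verts G. scattered G d W \<and> (\<forall>w\<in>W. Q w) \<longrightarrow> card W \<le> card S"
    and "t \<in> verts G" "Q t"
  shows "\<exists>s\<in>S. dist_le G d s t"
proof (rule ccontr)
  assume far: "\<not> (\<exists>s\<in>S. dist_le G d s t)"
  then have "t \<notin> S" using dist_le_refl[OF assms(7), of d] by blast
  moreover have "scattered G d (insert t S)"
    unfolding scattered_def
  proof (intro ballI impI)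
    fix u w assume "u \<in> insert t S" "w \<in> insert t S" "u \<noteq> w"
    then consider "u \<in> S" "w \<in> S" | "u = t" "w \<in> S" | "u \<in> S" "w = t" by blast
    then show "\<not> dist_le G d u w"
    proof cases
      case 1 then show ?thesis using assms(4) \<open>u \<noteq> w\<close> unfolding scattered_def by blast
    next
      case 2 then show ?thesis using far dist_le_sym[OF assms(1), of d t w] by blast
    next
      case 3 then show ?thesis using far by blast
    qed
  qed
  then have "card (insert t S) \<le> card S"
    by (intro assms(6)[rule_format]) (use assms(3,5,7,8) in auto)
  ultimately show False using assms(2) by simp
qed

section \<open>Locality of local formulas\<close>

lemma local_fm_Ex_shape:
  "local_fm r x (Ex y \<phi>) \<Longrightarrow> \<exists>\<theta>. \<phi> = Conj (Dist r x y) \<theta> \<and> y \<noteq> x \<and> local_fm r x \<theta>"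
  by (cases \<phi>; simp) (rename_tac f1 f2, case_tac f1; auto)

lemma local_fm_All_shape:
  "local_fm r x (All y \<phi>) \<Longrightarrow> \<exists>\<theta>. \<phi> = Imp (Dist r x y) \<theta> \<and> y \<noteq> x \<and> local_fm r x \<theta>"
  by (cases \<phi>; simp) (rename_tac f1 f2, case_tac f1; auto)

lemma dist_le_restrict_iff:
  assumes "layering G lam" "verts H = verts G \<inter> S"
    "\<forall>u w. adj H u w \<longleftrightarrow> adj G u w \<and> u \<in> S \<and> w \<in> S"
    "\<forall>w\<in>verts G. \<bar>lam w - lam a\<bar> \<le> int k \<longrightarrow> w \<in> S"
  shows "dist_le H k a b \<longleftrightarrow> dist_le G k a b"
    and "dist_le G k a b \<Longrightarrow> b \<in> verts H \<and> \<bar>lam b - lam a\<bar> \<le> int k"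
proof -
  show "dist_le H k a b \<longleftrightarrow> dist_le G k a b"
    using dist_le_restrict[OF assms] dist_le_subgraph[of H G] assms(2,3) by blast
  assume "dist_le G k a b"
  then show "b \<in> verts H \<and> \<bar>lam b - lam a\<bar> \<le> int k"
    using dist_le_verts dist_le_layer_bound[OF assms(1)] assms(2,4)
    by (metis IntI abs_minus_commute)
qed

text \<open>An r-local formula at x only looks at the r-ball around x, which lies in the layers within
  distance r of x: so it may be evaluated in any induced subinterpretation containing those layers
  and agreeing with G on them.\<close>

lemma sat_local_restrict:
  assumes "local_fm r x \<psi>" "layering G lam"
    and H: "verts H = verts G \<inter> S" "\<forall>u w. adj H u w \<longleftrightarrow> adj G u w \<and> u \<in> S \<and> w \<in> S"
    and "\<forall>w\<in>verts G. \<bar>lam w - lam (\<nu> x)\<bar> \<le> int r \<longrightarrow> w \<in> S"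
    and "\<forall>P\<in>preds \<psi>. \<forall>w\<in>verts G. \<bar>lam w - lam (\<nu> x)\<bar> \<le> int r \<longrightarrow> (w \<in> upred H P \<longleftrightarrow> w \<in> upred G P)"
    and "\<forall>z\<in>fv \<psi>. \<nu> z \<in> verts G \<and> \<bar>lam (\<nu> z) - lam (\<nu> x)\<bar> \<le> int r"
  shows "sat H \<nu> \<psi> = sat G \<nu> \<psi>"
  using assms(1,5-7)
proof (induction \<psi> arbitrary: \<nu> rule: measure_induct_rule[where f=size])
  case (less \<psi> \<nu>)
  note S = less.prems(2) and P = less.prems(3) and V = less.prems(4)
  note guard = dist_le_restrict_iff[OF assms(2) H S]
  have body: "sat H (\<nu>(y := w)) \<theta> = sat G (\<nu>(y := w)) \<theta>"
    if "local_fm r x \<theta>" "size \<theta> < size \<psi>" "preds \<theta> \<subseteq> preds \<psi>" "fv \<theta> \<subseteq> insert y (fv \<psi>)"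
      "y \<noteq> x" "dist_le G r (\<nu> x) w" for \<theta> y w
  proof (rule less.IH)
    have "w \<in> verts G" "\<bar>lam w - lam (\<nu> x)\<bar> \<le> int r"
      using guard(2)[OF that(6)] H(1) by auto
    then show "\<forall>z\<in>fv \<theta>. (\<nu>(y := w)) z \<in> verts G \<and> \<bar>lam ((\<nu>(y := w)) z) - lam ((\<nu>(y := w)) x)\<bar> \<le> int r"
      using V that(4,5) by auto
  qed (use that S P in auto)
  show ?case
  proof (cases \<psi>)
    case (Ex y \<phi>)
    then obtain \<theta> where th: "\<phi> = Conj (Dist r x y) \<theta>" "y \<noteq> x" "local_fm r x \<theta>"
      using local_fm_Ex_shape less.prems(1) by blast
    have body_\<theta>: "dist_le G r (\<nu> x) w \<Longrightarrow> sat H (\<nu>(y := w)) \<theta> = sat G (\<nu>(y := w)) \<theta>" for w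
      using body[OF th(3) _ _ _ th(2)] Ex th by auto
    have "sat H \<nu> \<psi> = (\<exists>w\<in>verts H. dist_le H r (\<nu> x) w \<and> sat H (\<nu>(y := w)) \<theta>)"
      using Ex th by (simp add: sat_Dist del: sat.simps(6))
    also have "\<dots> = (\<exists>w\<in>verts G. dist_le G r (\<nu> x) w \<and> sat G (\<nu>(y := w)) \<theta>)"
      using guard body_\<theta> H(1) by auto
    also have "\<dots> = sat G \<nu> \<psi>"
      using Ex th by (simp add: sat_Dist del: sat.simps(6))
    finally show ?thesis .
  next
    case (All y \<phi>)
    then obtain \<theta> where th: "\<phi> = Imp (Dist r x y) \<theta>" "y \<noteq> x" "local_fm r x \<theta>"
      using local_fm_All_shape less.prems(1) by blast
    have body_\<theta>: "dist_le G r (\<nu> x) w \<Longrightarrow> sat H (\<nu>(y := w)) \<theta> = sat G (\<nu>(y := w)) \<theta>" for w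
      using body[OF th(3) _ _ _ th(2)] All th by auto
    have "sat H \<nu> \<psi> = (\<forall>w\<in>verts H. dist_le H r (\<nu> x) w \<longrightarrow> sat H (\<nu>(y := w)) \<theta>)"
      using All th by (simp add: sat_Dist del: sat.simps(6))
    also have "\<dots> = (\<forall>w\<in>verts G. dist_le G r (\<nu> x) w \<longrightarrow> sat G (\<nu>(y := w)) \<theta>)"
      using guard body_\<theta> H(1) by auto
    also have "\<dots> = sat G \<nu> \<psi>"
      using All th by (simp add: sat_Dist del: sat.simps(6))
    finally show ?thesis .
  next
    case (Edge a b)
    then have "\<nu> a \<in> S" "\<nu> b \<in> S" using V S by auto
    then show ?thesis using Edge H(2) by simp
  qed (use less.IH less.prems in auto)
qed

section \<open>Covers of the integers\<close>

locale int_cover =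
  fixes l :: int and r :: nat
  assumes width_gt: "2 * int r < l"

begin

definition period :: int where "period = l - 2 * int r"

lemma period_pos: "period > 0"
  using width_gt by (simp add: period_def)

lemma width_pos: "l \<ge> 1"
  using width_gt by linarith

lemma width_eq: "l = period + 2 * int r"
  by (simp add: period_def)

lemma mem_cover: "I \<in> cover l r n \<longleftrightarrow> (\<exists>i. I = ivl i l \<and> i mod period = n mod period)"
  by (auto simp: cover_def period_def)

lemma ivl_Min: "Min (ivl i l) = i" and ivl_Max: "Max (ivl i l) = i + l - 1"
  using width_pos by (auto intro: Min_eqI Max_eqI simp: ivl_def)

lemma mid_ivl: "mid d (ivl i l) = {i + int d .. i + l - 1 - int d}"
  by (simp add: mid_def ivl_Min ivl_Max)

lemma mid_r_ivl: "mid r (ivl i l) = {i + int r .. i + int r + period - 1}"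
  by (simp add: mid_ivl period_def algebra_simps)

lemma mid_antimono: "d' \<le> d \<Longrightarrow> mid d I \<subseteq> mid d' I"
  by (auto simp: mid_def)

lemma mid_subset_cover_interval: "I \<in> cover l r n \<Longrightarrow> mid d I \<subseteq> I"
  unfolding mem_cover by (auto simp: mid_ivl) (auto simp: ivl_def)

lemma ivl_inj: "ivl i l = ivl i' l \<Longrightarrow> i = i'"
  using ivl_Min by metis

lemma same_residue_far:
  assumes "i mod period = i' mod period" "i \<noteq> i'"
  shows "\<bar>i - i'\<bar> \<ge> period"
proof -
  have "period dvd (i - i')" using assms(1) by (simp add: mod_eq_dvd_iff)
  then obtain c where c: "i - i' = period * c" by blast
  have "c \<noteq> 0" using c assms(2) by auto
  then have "\<bar>c\<bar> \<ge> 1" by linarith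
  then have "\<bar>period * c\<bar> \<ge> period * 1" using period_pos by (simp add: abs_mult)
  then show ?thesis using c by simp
qed

text \<open>In the cover determined by n, every layer j lies in the M_r-part of exactly one interval,
  its home; home_start n j is the left end of that interval.\<close>

definition home_start :: "int \<Rightarrow> int \<Rightarrow> int" where
  "home_start n j = j - int r - ((j - int r - n) mod period)"

definition home :: "int \<Rightarrow> int \<Rightarrow> int set" where
  "home n j = ivl (home_start n j) l"

lemma home_start_mod: "home_start n j mod period = n mod period"
proof -
  have "home_start n j = n + period * ((j - int r - n) div period)"
    unfolding home_start_def using div_mult_mod_eq[of "j - int r - n" period]
    by (simp add: algebra_simps)
  then show ?thesis by simp
qed

lemma home_start_bounds: "home_start n j + int r \<le> j" "j \<le> home_start n j + int r + period - 1"
proof -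
  have "0 \<le> (j - int r - n) mod period" "(j - int r - n) mod period < period"
    using period_pos by auto
  then show "home_start n j + int r \<le> j" "j \<le> home_start n j + int r + period - 1"
    unfolding home_start_def by linarith+
qed

lemma home_in_cover: "home n j \<in> cover l r n"
  unfolding home_def mem_cover using home_start_mod by blast

lemma mem_mid_home: "j \<in> mid r (home n j)"
  using home_start_bounds[where n=n and j=j] unfolding home_def mid_r_ivl by auto

lemma cover_mid_eq_home:
  assumes "I \<in> cover l r n" "j \<in> mid r I"
  shows "I = home n j"
proof -
  obtain i where i: "I = ivl i l" "i mod period = n mod period" using assms(1) mem_cover by blast
  have "i + int r \<le> j" "j \<le> i + int r + period - 1" using assms(2) i(1) mid_r_ivl by auto
  moreover note home_start_bounds[where n=n and j=j]
  ultimately have "i = home_start n j"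
    using same_residue_far[of i "home_start n j"] i(2) home_start_mod by fastforce
  then show ?thesis using i(1) by (simp add: home_def)
qed

lemma cover_mid_disjoint:
  assumes "I \<in> cover l r n" "J \<in> cover l r n" "j \<in> mid r I" "j \<in> mid r J"
  shows "I = J"
  using cover_mid_eq_home assms by metis

lemma cover_mid_ball:
  assumes "I \<in> cover l r n" "a \<in> mid d I" "\<bar>c - a\<bar> \<le> int d"
  shows "c \<in> I"
proof -
  obtain i where i: "I = ivl i l" using assms(1) mem_cover by blast
  have "a \<in> {i + int d .. i + l - 1 - int d}" using assms(2) i mid_ivl by simp
  then show ?thesis using assms(3) i unfolding ivl_def by auto
qed

lemma cover_mid_far:
  assumes "I \<in> cover l r n" "J \<in> cover l r n" "I \<noteq> J" "a \<in> mid (2 * r) I" "b \<in> mid (2 * r) J"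
  shows "\<bar>a - b\<bar> > 2 * int r"
proof -
  obtain i j where i: "I = ivl i l" "i mod period = n mod period"
    and j: "J = ivl j l" "j mod period = n mod period"
    using assms(1,2) mem_cover by meson
  then have "\<bar>i - j\<bar> \<ge> period" using same_residue_far assms(3) by metis
  moreover have "i + 2 * int r \<le> a" "a \<le> i + l - 1 - 2 * int r"
    "j + 2 * int r \<le> b" "b \<le> j + l - 1 - 2 * int r"
    using assms(4,5) i(1) j(1) by (auto simp: mid_ivl)
  ultimately show ?thesis using width_eq by linarith
qed

lemma finite_filter_atLeastAtMost: "finite {i \<in> {a .. b::int}. P i}"
  by (rule finite_subset[of _ "{a..b}"]) auto

definition depth :: "int \<Rightarrow> int \<Rightarrow> nat" where
  "depth n j = card {i \<in> {j - l + 1 .. j}. i mod period = n mod period}"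

lemma cover_containing:
  "{I \<in> cover l r n. j \<in> I} = (\<lambda>i. ivl i l) ` {i \<in> {j - l + 1 .. j}. i mod period = n mod period}"
  by (auto simp: mem_cover ivl_def)

lemma card_cover_containing: "card {I \<in> cover l r n. j \<in> I} = depth n j"
  unfolding cover_containing depth_def by (rule card_image) (meson inj_onI ivl_inj)

lemma finite_cover_containing: "finite {I \<in> cover l r n. j \<in> I}"
  unfolding cover_containing by (rule finite_imageI) (rule finite_filter_atLeastAtMost)

lemma finite_cover_meeting:
  assumes "finite V"
  shows "finite {I \<in> cover l r n. \<exists>v\<in>V. lam v \<in> I}"
proof -
  have "{I \<in> cover l r n. \<exists>v\<in>V. lam v \<in> I} = (\<Union>v\<in>V. {I \<in> cover l r n. lam v \<in> I})" by auto
  then show ?thesis using assms finite_cover_containing by simp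
qed

lemma depth_pos: "depth n j \<ge> 1"
proof -
  have "home_start n j \<in> {i \<in> {j - l + 1 .. j}. i mod period = n mod period}"
    using home_start_bounds[where n=n and j=j] home_start_mod width_eq by auto
  then have "{i \<in> {j - l + 1 .. j}. i mod period = n mod period} \<noteq> {}" by blast
  then have "depth n j \<noteq> 0" unfolding depth_def using finite_filter_atLeastAtMost by (simp add: card_eq_0_iff)
  then show ?thesis by linarith
qed

lemma sum_depth: "(\<Sum>n\<in>{0..<period}. depth n j) = nat l"
proof -
  let ?A = "{j - l + 1 .. j}"
  have part: "?A = (\<Union>n\<in>{0..<period}. {i \<in> ?A. i mod period = n mod period})"
  proof
    show "?A \<subseteq> (\<Union>n\<in>{0..<period}. {i \<in> ?A. i mod period = n mod period})"
    proof
      fix i assume "i \<in> ?A"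
      moreover have "i mod period \<in> {0..<period}" using period_pos by auto
      ultimately show "i \<in> (\<Union>n\<in>{0..<period}. {i \<in> ?A. i mod period = n mod period})" by force
    qed
  qed auto
  have "card ?A = (\<Sum>n\<in>{0..<period}. card {i \<in> ?A. i mod period = n mod period})"
    by (subst part, rule card_UN_disjoint, simp, rule ballI, rule finite_filter_atLeastAtMost)
      (auto simp: mod_pos_pos_trivial)
  then show ?thesis unfolding depth_def by simp
qed

lemma sum_depth_over:
  assumes "finite D"
  shows "(\<Sum>n\<in>{0..<period}. \<Sum>v\<in>D. depth n (lam v)) = card D * nat l"
proof -
  have "(\<Sum>n\<in>{0..<period}. \<Sum>v\<in>D. depth n (lam v)) = (\<Sum>v\<in>D. \<Sum>n\<in>{0..<period}. depth n (lam v))"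
    by (rule sum.swap)
  also have "\<dots> = (\<Sum>v\<in>D. nat l)" using sum_depth by simp
  finally show ?thesis by simp
qed

text \<open>j is centred for n if it is at least 3r away from both ends of the M_r-part of its home;
  then the whole 2r-neighbourhood of j lies in the M_2r-part of that home.\<close>

definition centred :: "int \<Rightarrow> int \<Rightarrow> bool" where
  "centred n j \<longleftrightarrow> 3 * int r \<le> (j - int r - n) mod period \<and> (j - int r - n) mod period \<le> period - 1 - 3 * int r"

lemma centred_ball:
  assumes "centred n j" "\<bar>c - j\<bar> \<le> 2 * int r"
  shows "c \<in> mid (2 * r) (home n j)"
  using assms width_eq unfolding home_def mid_ivl centred_def home_start_def by auto

lemma centred_ball_home:
  assumes "centred n j" "\<bar>c - j\<bar> \<le> 2 * int r" "I \<in> cover l r n" "c \<in> mid r I"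
  shows "I = home n j" "c \<in> mid (2 * r) I"
proof -
  have c: "c \<in> mid (2 * r) (home n j)" using centred_ball[OF assms(1,2)] .
  then have "c \<in> mid r (home n j)" using mid_antimono[of r "2 * r"] by auto
  then show "I = home n j" using cover_mid_disjoint[OF assms(3) home_in_cover assms(4)] by blast
  with c show "c \<in> mid (2 * r) I" by simp
qed

lemma card_not_centred: "card {n \<in> {0..<period}. \<not> centred n j} \<le> 6 * r"
proof -
  let ?f = "\<lambda>n. (j - int r - n) mod period"
  have inj: "inj_on ?f {n \<in> {0..<period}. \<not> centred n j}"
  proof (rule inj_onI)
    fix a b assume a: "a \<in> {n \<in> {0..<period}. \<not> centred n j}"
      and b: "b \<in> {n \<in> {0..<period}. \<not> centred n j}" and e: "?f a = ?f b"
    have "period dvd ((j - int r - a) - (j - int r - b))" using e by (simp add: mod_eq_dvd_iff)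
    then have "b mod period = a mod period" by (simp add: mod_eq_dvd_iff)
    then show "a = b" using a b by (simp add: mod_pos_pos_trivial)
  qed
  have "?f ` {n \<in> {0..<period}. \<not> centred n j} \<subseteq> {0..<3 * int r} \<union> {period - 3 * int r..<period}"
  proof
    fix u assume "u \<in> ?f ` {n \<in> {0..<period}. \<not> centred n j}"
    then obtain n where n: "\<not> centred n j" "u = ?f n" by auto
    have "0 \<le> u" "u < period" using n(2) period_pos by auto
    then show "u \<in> {0..<3 * int r} \<union> {period - 3 * int r..<period}" using n unfolding centred_def by auto
  qed
  then have "card {n \<in> {0..<period}. \<not> centred n j} \<le> card ({0..<3 * int r} \<union> {period - 3 * int r..<period})"
    by (rule card_inj_on_le[OF inj]) simp
  also have "\<dots> \<le> card {0..<3 * int r} + card {period - 3 * int r..<period}" by (rule card_Un_le)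
  also have "\<dots> = 6 * r" by simp
  finally show ?thesis .
qed

lemma card_not_centred_some:
  assumes "finite Z"
  shows "card {n \<in> {0..<period}. \<exists>c\<in>Z. \<not> centred n (lam c)} \<le> 6 * r * card Z"
proof -
  have "{n \<in> {0..<period}. \<exists>c\<in>Z. \<not> centred n (lam c)} = (\<Union>c\<in>Z. {n \<in> {0..<period}. \<not> centred n (lam c)})"
    by auto
  then have "card {n \<in> {0..<period}. \<exists>c\<in>Z. \<not> centred n (lam c)}
      \<le> (\<Sum>c\<in>Z. card {n \<in> {0..<period}. \<not> centred n (lam c)})"
    using card_UN_le[OF assms] by simp
  also have "\<dots> \<le> (\<Sum>c\<in>Z. 6 * r)" using card_not_centred by (intro sum_mono) auto
  finally show ?thesis by (simp add: mult.commute)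
qed

lemma enough_centred_residues:
  fixes \<epsilon>2 :: real
  assumes "\<epsilon>2 > 0" "Good \<subseteq> {0..<period}" "card ({0..<period} - Good) \<le> 6 * r * k"
    and "real_of_int l > 2 * real r * (1 + max (2 / \<epsilon>2) (6 * real k))"
  shows "real (card Good) * \<epsilon>2 \<ge> 2 * real r" "Good \<noteq> {}"
proof -
  have "card Good + card ({0..<period} - Good) = nat period"
    using card_Diff_subset[OF finite_subset[OF assms(2)] assms(2)] card_mono[OF _ assms(2)] by simp
  then have split: "real (card Good) + real (card ({0..<period} - Good)) = real_of_int period"
    using period_pos by (metis of_int_of_nat_eq of_nat_add nat_0_le less_imp_le)
  have bound: "real_of_int period > 2 * real r * max (2 / \<epsilon>2) (6 * real k)"
    using assms(4) width_eq by (simp add: algebra_simps)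
  have "real (card Good) * \<epsilon>2 \<ge> 2 * real r \<and> Good \<noteq> {}"
  proof (cases "r = 0")
    case True
    then show ?thesis using split period_pos assms(1,3) by auto
  next
    case False
    then have r: "real r > 0" by simp
    have "real_of_int period > 2 * real r * (2 / \<epsilon>2)" "real_of_int period \<ge> 2 * real r * (6 * real k)"
      using bound mult_left_mono[OF max.cobounded1, of "2 * real r"] mult_left_mono[OF max.cobounded2, of "2 * real r"] r
      by (smt (verit))+
    moreover have "real (card ({0..<period} - Good)) \<le> 6 * real r * real k"
      using assms(3) by (metis of_nat_le_iff of_nat_mult of_nat_numeral)
    ultimately have good: "real (card Good) * 2 \<ge> real_of_int period" "real_of_int period * \<epsilon>2 > 4 * real r"
      using split assms(1) by (simp_all add: field_simps)
    then have "real (card Good) * 2 * \<epsilon>2 > 4 * real r"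
      using mult_right_mono[OF good(1), of \<epsilon>2] assms(1) by linarith
    then have "real (card Good) * \<epsilon>2 > 2 * real r" by (simp add: algebra_simps)
    then show ?thesis using r by auto
  qed
  then show "real (card Good) * \<epsilon>2 \<ge> 2 * real r" "Good \<noteq> {}" by auto
qed

text \<open>Averaging over the good residues: every layer is covered l = period + 2r times in total
  over all residues and at least once for each residue, so some good residue pays at most
  2r/|Good| extra per element of D.\<close>

lemma exists_cheap_residue:
  fixes \<epsilon>2 :: real
  assumes "\<epsilon>2 > 0" "finite D" "Good \<subseteq> {0..<period}" "real (card Good) * \<epsilon>2 \<ge> 2 * real r" "Good \<noteq> {}"
  shows "\<exists>n\<in>Good. real (\<Sum>v\<in>D. depth n (lam v)) \<le> (1 + \<epsilon>2) * real (card D)"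
proof (rule ccontr)
  define cost where "cost n = real (\<Sum>v\<in>D. depth n (lam v))" for n
  define Bad where "Bad = {0..<period} - Good"
  define d g b where "d = real (card D)" and "g = real (card Good)" and "b = real (card Bad)"
  assume "\<not> (\<exists>n\<in>Good. real (\<Sum>v\<in>D. depth n (lam v)) \<le> (1 + \<epsilon>2) * real (card D))"
  then have "(\<Sum>n\<in>Good. (1 + \<epsilon>2) * d) < (\<Sum>n\<in>Good. cost n)"
    using sum_strict_mono[OF finite_subset[OF assms(3)] assms(5), of "\<lambda>_. (1 + \<epsilon>2) * d" cost]
    unfolding cost_def d_def by force
  then have good_part: "d * g + d * (g * \<epsilon>2) < (\<Sum>n\<in>Good. cost n)"
    unfolding g_def by (simp add: algebra_simps)
  have "(\<Sum>n\<in>Bad. d) \<le> (\<Sum>n\<in>Bad. cost n)"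
  proof (rule sum_mono)
    fix n
    have "card D \<le> (\<Sum>v\<in>D. depth n (lam v))"
      using sum_mono[of D "\<lambda>_. 1" "\<lambda>v. depth n (lam v)"] depth_pos by simp
    then show "d \<le> cost n" unfolding cost_def d_def by (simp only: of_nat_le_iff)
  qed
  then have bad_part: "d * b \<le> (\<Sum>n\<in>Bad. cost n)" unfolding b_def by (simp add: mult.commute)
  have "(\<Sum>n\<in>Good. cost n) + (\<Sum>n\<in>Bad. cost n) = (\<Sum>n\<in>{0..<period}. cost n)"
    unfolding Bad_def using sum.subset_diff[OF assms(3), of cost] by simp
  also have "\<dots> = real (\<Sum>n\<in>{0..<period}. \<Sum>v\<in>D. depth n (lam v))"
    unfolding cost_def by (rule of_nat_sum[symmetric])
  also have "\<dots> = d * real_of_int l"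
    using sum_depth_over[OF assms(2)] width_pos unfolding d_def by simp
  also have "\<dots> = d * real_of_int period + d * (2 * real r)"
    by (subst width_eq) (simp add: algebra_simps)
  finally have total: "(\<Sum>n\<in>Good. cost n) + (\<Sum>n\<in>Bad. cost n) = d * real_of_int period + d * (2 * real r)" .
  have "card Good + card Bad = nat period"
    unfolding Bad_def using card_Diff_subset[OF finite_subset[OF assms(3)] assms(3)] card_mono[OF _ assms(3)]
    by simp
  then have "g + b = real_of_int period"
    unfolding g_def b_def using period_pos by (metis of_int_of_nat_eq of_nat_add nat_0_le less_imp_le)
  then have "d * real_of_int period = d * g + d * b" by (metis distrib_left)
  moreover have "d * (2 * real r) \<le> d * (g * \<epsilon>2)"
    using assms(4) unfolding d_def g_def by (intro mult_left_mono) auto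
  ultimately show False using good_part bad_part total by linarith
qed

end

lemma gamma_witness:
  assumes "models (expand H X (verts H)) \<theta>"
  obtains D where "D \<subseteq> verts H" "card D = gamma H X \<theta>" "models (expand H X D) \<theta>"
proof -
  have "\<exists>k. \<exists>A\<subseteq>verts H. card A = k \<and> models (expand H X A) \<theta>"
    using assms by blast
  from LeastI_ex[OF this] show thesis
    using that unfolding gamma_def by blast
qed

lemma gamma_le_card:
  "A \<subseteq> verts H \<Longrightarrow> models (expand H X A) \<theta> \<Longrightarrow> gamma H X \<theta> \<le> card A"
  unfolding gamma_def by (rule Least_le) blast

locale approx_setting = int_cover l r
  for l :: int and r :: nat +
  fixes L :: "'p set" and X C M :: 'p and bs :: "'p basic list"
    and G :: "('v, 'p) interp" and lam :: "'v \<Rightarrow> int"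
    and Asel :: "int set \<Rightarrow> nat list \<Rightarrow> 'v set option" and \<epsilon>1 :: real
  assumes wf_bs: "\<forall>b\<in>set bs. wf_basic b"
    and preds_bs: "preds (bconj_fm bs) \<subseteq> L \<union> {X}"
    and X_pos: "X_positive X (bconj_fm bs)"
    and range_le: "\<forall>b\<in>set bs. b_range b \<le> r"
    and C_fresh: "C \<notin> L \<union> {X}" and M_fresh: "M \<notin> L \<union> {X}" and C_neq_M: "C \<noteq> M"
    and G_interp: "L_interp L G" and layering: "layering G lam"
    and eps1_pos: "\<epsilon>1 > 0"
    and Asel_spec: "\<forall>a b q. a \<le> b \<longrightarrow> length q = length bs \<longrightarrow>
           (let H = G_sub G lam r C M {a..b}; \<theta> = bconj_variant C M bs q in
             (\<not> models (expand H X (verts H)) \<theta> \<longrightarrow> Asel {a..b} q = None) \<and>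
             (models (expand H X (verts H)) \<theta> \<longrightarrow>
                (\<exists>A. Asel {a..b} q = Some A \<and> A \<subseteq> verts H \<and> models (expand H X A) \<theta>
                     \<and> real (card A) \<le> (1 + \<epsilon>1) * real (gamma H X \<theta>))))"

begin

abbreviation Gsub :: "int set \<Rightarrow> ('v, 'p) interp" where
  "Gsub I \<equiv> G_sub G lam r C M I"

abbreviation layers :: "int set \<Rightarrow> 'v set" where
  "layers J \<equiv> layer_pre G lam J"

lemma finite_verts: "finite (verts G)"
  using G_interp by (simp add: L_interp_def)

lemma symp_adj: "symp (adj G)"
  using G_interp by (simp add: L_interp_def symp_def)

lemma mem_layers: "v \<in> layers J \<longleftrightarrow> v \<in> verts G \<and> lam v \<in> J"
  by (simp add: layer_pre_def)

lemma layers_subset: "layers J \<subseteq> verts G"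
  by (auto simp: layer_pre_def)

lemma layers_mono: "J \<subseteq> J' \<Longrightarrow> layers J \<subseteq> layers J'"
  by (auto simp: layer_pre_def)

lemma verts_Gsub: "verts (Gsub I) = layers I"
  by (auto simp: G_sub_def restrict_def layer_pre_def)

lemma adj_Gsub: "adj (Gsub I) u w = (adj G u w \<and> u \<in> layers I \<and> w \<in> layers I)"
  by (simp add: G_sub_def restrict_def)

lemma upred_Gsub: "upred (Gsub I) P =
   (if P = M then layers (mid r I) else if P = C then layers (mid (2 * r) I) else upred G P \<inter> layers I)"
  by (simp add: G_sub_def restrict_def)

lemma upred_Gsub_C: "upred (expand (Gsub I) X A) C = layers (mid (2 * r) I)"
  using C_fresh C_neq_M by (simp add: upred_Gsub)

lemma upred_Gsub_M: "upred (expand (Gsub I) X A) M = layers (mid r I)"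
  using M_fresh by (simp add: upred_Gsub)

lemma symp_adj_Gsub: "symp (adj (Gsub I))"
  using symp_adj by (auto simp: symp_def adj_Gsub)

lemma dist_le_Gsub_G: "dist_le (Gsub I) k u w \<Longrightarrow> dist_le G k u w"
  by (rule dist_le_subgraph[of "Gsub I" G]) (auto simp: verts_Gsub adj_Gsub layers_subset[THEN subsetD])

lemma scattered_Gsub: "scattered G d W \<Longrightarrow> scattered (Gsub I) d W"
  unfolding scattered_def using dist_le_Gsub_G by blast

lemma dist_le_G_Gsub:
  assumes "dist_le G k u w" "\<forall>v\<in>verts G. \<bar>lam v - lam u\<bar> \<le> int k \<longrightarrow> lam v \<in> I"
  shows "dist_le (Gsub I) k u w"
  by (rule dist_le_restrict[OF layering _ _ _ assms(1), of _ "layers I"])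
    (use assms(2) in \<open>auto simp: verts_Gsub adj_Gsub layer_pre_def\<close>)

lemma cover_mid_layer_ball:
  assumes "I \<in> cover l r n" "lam w \<in> mid d I" "k \<le> d"
  shows "\<forall>u\<in>verts G. \<bar>lam u - lam w\<bar> \<le> int k \<longrightarrow> lam u \<in> I"
  using cover_mid_ball[OF assms(1,2)] assms(3) by force

lemma basic_props:
  assumes "b \<in> set bs" "b = BEx m' r' x \<psi> \<or> b = BAll m' r' x \<psi>"
  shows "local_fm r' x \<psi>" "fv \<psi> \<subseteq> {x}" "r' \<le> r"
proof -
  have "wf_basic b" "b_range b \<le> r" using wf_bs range_le assms(1) by auto
  then show "local_fm r' x \<psi>" "fv \<psi> \<subseteq> {x}" "r' \<le> r"
    using assms(2) by (auto simp: wf_basic_def)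
qed

text \<open>The core of a basic existential of spread 0 does not occur in the sentence, so it need not
  be X-positive.\<close>

lemma core_X_positive:
  assumes "b \<in> set bs" "b = BAll m' r' x \<psi> \<or> (b = BEx m' r' x \<psi> \<and> m' \<ge> 1)"
  shows "xpos X \<psi> \<and> preds \<psi> \<subseteq> L \<union> {X}"
proof -
  have b: "xpos X (basic_fm b)" "preds (basic_fm b) \<subseteq> L \<union> {X}"
    using X_pos preds_bs assms(1)
    by (auto simp: X_positive_def bconj_fm_def xpos_conj_list preds_conj_list)
  from assms(2) show ?thesis
  proof
    assume b': "b = BAll m' r' x \<psi>"
    define vs where "vs = fresh_vars x \<psi> (Suc m')"
    have ne: "vs \<noteq> []" using fresh_vars_props(2)[of x \<psi> "Suc m'"] vs_def by auto
    then obtain v where "v \<in> set vs" by (cases vs) auto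
    then show ?thesis using b b' ne
      by (auto simp: vs_def[symmetric] Let_def xpos_Alls preds_Alls xpos_disj_list preds_disj_list
          xpos_xneg_rn preds_rn)
  next
    assume b': "b = BEx m' r' x \<psi> \<and> m' \<ge> 1"
    define vs where "vs = fresh_vars x \<psi> m'"
    have ne: "vs \<noteq> []" using fresh_vars_props(2)[of x \<psi> m'] vs_def b' by auto
    then obtain v where "v \<in> set vs" by (cases vs) auto
    then show ?thesis using b b' ne
      by (auto simp: vs_def[symmetric] Let_def xpos_Exs preds_Exs xpos_conj_list preds_conj_list
          xpos_xneg_rn preds_rn)
  qed
qed

lemma holds_at_mono:
  "xpos X \<psi> \<Longrightarrow> A \<subseteq> B \<Longrightarrow> holds_at (expand H X A) \<psi> w \<Longrightarrow> holds_at (expand H X B) \<psi> w"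
  unfolding holds_at_def by (rule sat_expand_mono)

lemma holds_at_Gsub_iff:
  assumes "local_fm r' x \<psi>" "fv \<psi> \<subseteq> {x}" "preds \<psi> \<subseteq> L \<union> {X}"
    and "w \<in> verts G" "\<forall>u\<in>verts G. \<bar>lam u - lam w\<bar> \<le> int r' \<longrightarrow> lam u \<in> I"
    and "\<forall>u\<in>verts G. \<bar>lam u - lam w\<bar> \<le> int r' \<longrightarrow> (u \<in> A \<longleftrightarrow> u \<in> A')"
  shows "holds_at (expand (Gsub I) X A') \<psi> w = holds_at (expand G X A) \<psi> w"
  unfolding holds_at_def
proof (rule sat_local_restrict[OF assms(1), of "expand G X A" lam _ "layers I"])
  show "layering (expand G X A) lam" using layering by (simp add: layering_def)
  show "verts (expand (Gsub I) X A') = verts (expand G X A) \<inter> layers I"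
    using layers_subset by (auto simp: verts_Gsub)
  show "\<forall>u v. adj (expand (Gsub I) X A') u v = (adj (expand G X A) u v \<and> u \<in> layers I \<and> v \<in> layers I)"
    by (simp add: adj_Gsub)
  show "\<forall>u\<in>verts (expand G X A). \<bar>lam u - lam w\<bar> \<le> int r' \<longrightarrow> u \<in> layers I"
    using assms(5) by (simp add: mem_layers)
  show "\<forall>P\<in>preds \<psi>. \<forall>u\<in>verts (expand G X A). \<bar>lam u - lam w\<bar> \<le> int r' \<longrightarrow>
          (u \<in> upred (expand (Gsub I) X A') P) = (u \<in> upred (expand G X A) P)"
  proof (intro ballI impI)
    fix P u assume P: "P \<in> preds \<psi>" and u: "u \<in> verts (expand G X A)" "\<bar>lam u - lam w\<bar> \<le> int r'"
    show "(u \<in> upred (expand (Gsub I) X A') P) = (u \<in> upred (expand G X A) P)"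
    proof (cases "P = X")
      case True then show ?thesis using assms(6) u by simp
    next
      case False
      then have "P \<noteq> M" "P \<noteq> C" "u \<in> layers I"
        using P assms(3,5) u C_fresh M_fresh by (auto simp: mem_layers)
      then show ?thesis using False by (simp add: upred_Gsub)
    qed
  qed
  show "\<forall>z\<in>fv \<psi>. w \<in> verts (expand G X A) \<and> \<bar>lam w - lam w\<bar> \<le> int r'"
    using assms(4) by simp
qed

lemma holds_at_Gsub_imp_G:
  assumes "b \<in> set bs" "b = BAll m' r' x \<psi> \<or> (b = BEx m' r' x \<psi> \<and> m' \<ge> 1)"
    and "I \<in> cover l r n" "w \<in> layers (mid r I)" "AI \<subseteq> A"
    and "holds_at (expand (Gsub I) X AI) \<psi> w"
  shows "holds_at (expand G X A) \<psi> w"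
proof -
  have props: "local_fm r' x \<psi>" "fv \<psi> \<subseteq> {x}" "r' \<le> r"
    using basic_props[OF assms(1)] assms(2) by blast+
  have core: "xpos X \<psi>" "preds \<psi> \<subseteq> L \<union> {X}" using core_X_positive[OF assms(1,2)] by auto
  have w: "w \<in> verts G" "lam w \<in> mid r I" using assms(4) by (auto simp: mem_layers)
  have "holds_at (expand G X AI) \<psi> w"
    using holds_at_Gsub_iff[OF props(1,2) core(2) w(1) cover_mid_layer_ball[OF assms(3) w(2) props(3)], of AI AI]
      assms(6) by simp
  then show ?thesis by (rule holds_at_mono[OF core(1) assms(5)])
qed

lemma holds_at_G_imp_Gsub:
  assumes "b \<in> set bs" "b = BAll m' r' x \<psi> \<or> (b = BEx m' r' x \<psi> \<and> m' \<ge> 1)"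
    and "I \<in> cover l r n" "w \<in> layers (mid r I)" "D \<inter> layers I \<subseteq> A"
    and "holds_at (expand G X D) \<psi> w"
  shows "holds_at (expand (Gsub I) X A) \<psi> w"
proof -
  have props: "local_fm r' x \<psi>" "fv \<psi> \<subseteq> {x}" "r' \<le> r"
    using basic_props[OF assms(1)] assms(2) by blast+
  have core: "xpos X \<psi>" "preds \<psi> \<subseteq> L \<union> {X}" using core_X_positive[OF assms(1,2)] by auto
  have w: "w \<in> verts G" "lam w \<in> mid r I" using assms(4) by (auto simp: mem_layers)
  note ball = cover_mid_layer_ball[OF assms(3) w(2) props(3)]
  have "holds_at (expand (Gsub I) X (D \<inter> layers I)) \<psi> w"
    using holds_at_Gsub_iff[OF props(1,2) core(2) w(1) ball, of D "D \<inter> layers I"] ball assms(6)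
    by (simp add: mem_layers)
  then show ?thesis by (rule holds_at_mono[OF core(1) assms(5)])
qed

lemma Asel_cover:
  assumes "I \<in> cover l r n" "length q = length bs"
  shows "Asel I q = None \<longleftrightarrow> \<not> models (expand (Gsub I) X (verts (Gsub I))) (bconj_variant C M bs q)"
    and "Asel I q \<noteq> None \<Longrightarrow> the (Asel I q) \<subseteq> verts (Gsub I)
           \<and> models (expand (Gsub I) X (the (Asel I q))) (bconj_variant C M bs q)
           \<and> real (card (the (Asel I q))) \<le> (1 + \<epsilon>1) * real (gamma (Gsub I) X (bconj_variant C M bs q))"
proof -
  obtain i where i: "I = ivl i l" using assms(1) mem_cover by blast
  have "i \<le> i + l - 1" "I = {i .. i + l - 1}" using width_pos i by (auto simp: ivl_def)
  then have spec: "(\<not> models (expand (Gsub I) X (verts (Gsub I))) (bconj_variant C M bs q) \<longrightarrow> Asel I q = None) \<and>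
         (models (expand (Gsub I) X (verts (Gsub I))) (bconj_variant C M bs q) \<longrightarrow>
            (\<exists>A. Asel I q = Some A \<and> A \<subseteq> verts (Gsub I) \<and> models (expand (Gsub I) X A) (bconj_variant C M bs q)
                 \<and> real (card A) \<le> (1 + \<epsilon>1) * real (gamma (Gsub I) X (bconj_variant C M bs q))))"
    using Asel_spec assms(2) unfolding Let_def by metis
  then show "Asel I q = None \<longleftrightarrow> \<not> models (expand (Gsub I) X (verts (Gsub I))) (bconj_variant C M bs q)"
    by auto
  show "Asel I q \<noteq> None \<Longrightarrow> the (Asel I q) \<subseteq> verts (Gsub I)
           \<and> models (expand (Gsub I) X (the (Asel I q))) (bconj_variant C M bs q)
           \<and> real (card (the (Asel I q))) \<le> (1 + \<epsilon>1) * real (gamma (Gsub I) X (bconj_variant C M bs q))"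
    using spec by auto
qed

section \<open>Soundness of the glued solution\<close>

lemma card_UN_mid_layers:
  assumes "finite F" "F \<subseteq> cover l r n" "\<forall>I\<in>F. finite (W I) \<and> W I \<subseteq> layers (mid r I)"
  shows "card (\<Union>I\<in>F. W I) = (\<Sum>I\<in>F. card (W I))"
proof (rule card_UN_disjoint[OF assms(1)])
  show "\<forall>I\<in>F. \<forall>J\<in>F. I \<noteq> J \<longrightarrow> W I \<inter> W J = {}"
  proof (intro ballI impI)
    fix I J assume IJ: "I \<in> F" "J \<in> F" "I \<noteq> J"
    show "W I \<inter> W J = {}"
    proof (rule ccontr)
      assume "W I \<inter> W J \<noteq> {}"
      then obtain w where "w \<in> W I" "w \<in> W J" by blast
      then have "lam w \<in> mid r I" "lam w \<in> mid r J" using assms(3) IJ(1,2) by (meson mem_layers subsetD)+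
      then show False using cover_mid_disjoint IJ assms(2) by blast
    qed
  qed
qed (use assms(3) in blast)

lemma card_eq_sum_mid_layers:
  assumes "finite W" "W \<subseteq> verts G" "finite F" "F \<subseteq> cover l r n" "\<forall>w\<in>W. home n (lam w) \<in> F"
  shows "card W = (\<Sum>I\<in>F. card (W \<inter> layers (mid r I)))"
proof -
  have "W \<subseteq> (\<Union>I\<in>F. W \<inter> layers (mid r I))"
  proof
    fix w assume w: "w \<in> W"
    then have "w \<in> W \<inter> layers (mid r (home n (lam w)))"
      using assms(2) mem_mid_home by (auto simp: mem_layers)
    then show "w \<in> (\<Union>I\<in>F. W \<inter> layers (mid r I))" using w assms(5) by blast
  qed
  then have "W = (\<Union>I\<in>F. W \<inter> layers (mid r I))" by blast
  then show ?thesis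
    using card_UN_mid_layers[OF assms(3,4), of "\<lambda>I. W \<inter> layers (mid r I)"] assms(1) by simp
qed

text \<open>Points in the M_2r-parts of distinct intervals of one cover are more than 2r layers apart,
  and within one interval the relevant balls do not leave it.\<close>

lemma scattered_UN_mid_layers:
  assumes "F \<subseteq> cover l r n" "d \<le> 2 * r"
    and "\<forall>I\<in>F. W I \<subseteq> layers (mid (2 * r) I) \<and> scattered (Gsub I) d (W I)"
  shows "scattered G d (\<Union>I\<in>F. W I)"
  unfolding scattered_def
proof (intro ballI impI notI)
  fix u w assume "u \<in> (\<Union>I\<in>F. W I)" "w \<in> (\<Union>I\<in>F. W I)" and ne: "u \<noteq> w" and d: "dist_le G d u w"
  then obtain I J where IJ: "I \<in> F" "J \<in> F" "u \<in> W I" "w \<in> W J" by blast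
  have mids: "lam u \<in> mid (2 * r) I" "lam w \<in> mid (2 * r) J"
    using assms(3) IJ by (meson mem_layers subsetD)+
  show False
  proof (cases "I = J")
    case True
    have "dist_le (Gsub I) d u w"
      using dist_le_G_Gsub[OF d cover_mid_layer_ball[OF _ mids(1) assms(2)]] IJ(1) assms(1) by blast
    then show False using assms(3) IJ True ne unfolding scattered_def by blast
  next
    case False
    then have "\<bar>lam u - lam w\<bar> > 2 * int r"
      using cover_mid_far IJ(1,2) assms(1) mids by blast
    then show False using dist_le_layer_bound[OF layering d] assms(2) by linarith
  qed
qed

lemma plan_pigeonhole:
  assumes "plan (cover l r n) m p" "finite W" "W \<subseteq> verts G" "card W > m"
  obtains I where "I \<in> cover l r n" "card (W \<inter> layers (mid r I)) > p I"
proof (rule ccontr)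
  assume "\<not> thesis"
  then have le: "\<forall>I\<in>cover l r n. card (W \<inter> layers (mid r I)) \<le> p I" using that by force
  define F where "F = (\<lambda>w. home n (lam w)) ` W"
  define Sp where "Sp = {I \<in> cover l r n. p I \<noteq> 0}"
  have F: "finite F" "F \<subseteq> cover l r n" unfolding F_def using assms(2) home_in_cover by auto
  have Sp: "finite Sp" "(\<Sum>I\<in>Sp. p I) = m" using assms(1) by (auto simp: plan_def Sp_def)
  have "card W = (\<Sum>I\<in>F. card (W \<inter> layers (mid r I)))"
    by (rule card_eq_sum_mid_layers[OF assms(2,3) F]) (auto simp: F_def)
  also have "\<dots> \<le> (\<Sum>I\<in>F. p I)" using le F(2) by (intro sum_mono) auto
  also have "\<dots> = (\<Sum>I\<in>F \<inter> Sp. p I)"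
    by (rule sum.mono_neutral_right) (use F Sp_def in auto)
  also have "\<dots> \<le> m" using Sp by (metis inf_le2 sum_mono2 zero_le)
  finally show False using assms(4) by simp
qed

lemma sound_BEx:
  assumes b: "BEx m' r' x \<psi> \<in> set bs" and pl: "plan (cover l r n) m' p"
    and AI: "\<forall>I\<in>cover l r n. AI I \<subseteq> A \<and> models (expand (Gsub I) X (AI I)) (variant C M (p I) (BEx m' r' x \<psi>))"
  shows "models (expand G X A) (basic_fm (BEx m' r' x \<psi>))"
proof -
  have bp: "fv \<psi> \<subseteq> {x}" "r' \<le> r" using basic_props[OF b] by blast+
  have sym: "symp (adj (expand G X A))" using symp_adj by simp
  show ?thesis
  proof (cases "m' = 0")
  case True
  have "\<exists>W\<subseteq>verts (expand G X A). finite W \<and> card W = m' \<and> scattered (expand G X A) (2 * r') W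
      \<and> (\<forall>w\<in>W. holds_at (expand G X A) \<psi> w)"
    using True by (intro exI[of _ "{}"]) (simp add: scattered_def)
  then show ?thesis using models_basic_BEx[OF bp(1) sym] by blast
next
  case False
  have "\<forall>I\<in>cover l r n. \<exists>W. W \<subseteq> layers (mid (2 * r) I) \<and> finite W \<and> card W = p I
         \<and> scattered (Gsub I) (2 * r') W \<and> (\<forall>w\<in>W. holds_at (expand (Gsub I) X (AI I)) \<psi> w)"
  proof
    fix I assume I: "I \<in> cover l r n"
    have sym_I: "symp (adj (expand (Gsub I) X (AI I)))" using symp_adj_Gsub by simp
    have "models (expand (Gsub I) X (AI I)) (variant C M (p I) (BEx m' r' x \<psi>))" using AI I by blast
    then obtain W where "finite W" "card W = p I" "scattered (Gsub I) (2 * r') W"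
      "\<forall>w\<in>W. w \<in> layers (mid (2 * r) I) \<and> holds_at (expand (Gsub I) X (AI I)) \<psi> w"
      using models_variant_BEx[OF bp(1) sym_I] upred_Gsub_C by auto
    then show "\<exists>W. W \<subseteq> layers (mid (2 * r) I) \<and> finite W \<and> card W = p I
         \<and> scattered (Gsub I) (2 * r') W \<and> (\<forall>w\<in>W. holds_at (expand (Gsub I) X (AI I)) \<psi> w)"
      by blast
  qed
  then obtain W where W: "\<And>I. I \<in> cover l r n \<Longrightarrow> W I \<subseteq> layers (mid (2 * r) I) \<and> finite (W I)
      \<and> card (W I) = p I \<and> scattered (Gsub I) (2 * r') (W I)
      \<and> (\<forall>w\<in>W I. holds_at (expand (Gsub I) X (AI I)) \<psi> w)"
    by metis
  define Sp where "Sp = {I \<in> cover l r n. p I \<noteq> 0}"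
  have Sp: "finite Sp" "(\<Sum>I\<in>Sp. p I) = m'" "Sp \<subseteq> cover l r n" using pl by (auto simp: plan_def Sp_def)
  have "layers (mid (2 * r) I) \<subseteq> layers (mid r I)" for I
    by (rule layers_mono[OF mid_antimono]) simp
  then have W_mid: "I \<in> Sp \<Longrightarrow> W I \<subseteq> layers (mid r I)" for I
    using W Sp(3) by blast
  have "card (\<Union>I\<in>Sp. W I) = (\<Sum>I\<in>Sp. card (W I))"
    using card_UN_mid_layers[OF Sp(1,3), of W] W_mid W Sp(3) by blast
  also have "\<dots> = m'" using W Sp(2,3) by (metis (no_types, lifting) subsetD sum.cong)
  finally have "card (\<Union>I\<in>Sp. W I) = m'" .
  moreover have "scattered G (2 * r') (\<Union>I\<in>Sp. W I)"
    by (rule scattered_UN_mid_layers[OF Sp(3)]) (use W Sp(3) bp(2) in auto)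
  moreover have "\<forall>w\<in>(\<Union>I\<in>Sp. W I). holds_at (expand G X A) \<psi> w"
  proof
    fix w assume "w \<in> (\<Union>I\<in>Sp. W I)"
    then obtain I where I: "I \<in> Sp" "w \<in> W I" by blast
    have IR: "I \<in> cover l r n" using I(1) Sp(3) by blast
    have "holds_at (expand (Gsub I) X (AI I)) \<psi> w" using W[OF IR] I(2) by blast
    moreover have "AI I \<subseteq> A" using AI IR by blast
    ultimately show "holds_at (expand G X A) \<psi> w"
      using holds_at_Gsub_imp_G[OF b _ IR W_mid[OF I(1), THEN subsetD, OF I(2)]] False by simp
  qed
  moreover have "(\<Union>I\<in>Sp. W I) \<subseteq> verts G" "finite (\<Union>I\<in>Sp. W I)"
    using W Sp layers_subset by blast+
  ultimately show ?thesis
    using models_basic_BEx[OF bp(1) sym] by auto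
qed
qed

lemma sound_BAll:
  assumes b: "BAll m' r' x \<psi> \<in> set bs" and pl: "plan (cover l r n) m' p"
    and AI: "\<forall>I\<in>cover l r n. AI I \<subseteq> A \<and> models (expand (Gsub I) X (AI I)) (variant C M (p I) (BAll m' r' x \<psi>))"
  shows "models (expand G X A) (basic_fm (BAll m' r' x \<psi>))"
proof -
  have bp: "fv \<psi> \<subseteq> {x}" using basic_props[OF b] by blast
  have no_W: "\<not> (\<exists>W\<subseteq>verts G. finite W \<and> card W = Suc m' \<and> scattered G (2 * r') W
       \<and> (\<forall>w\<in>W. \<not> holds_at (expand G X A) \<psi> w))"
  proof
    assume "\<exists>W\<subseteq>verts G. finite W \<and> card W = Suc m' \<and> scattered G (2 * r') W
       \<and> (\<forall>w\<in>W. \<not> holds_at (expand G X A) \<psi> w)"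
    then obtain W where W: "W \<subseteq> verts G" "finite W" "card W = Suc m'" "scattered G (2 * r') W"
       "\<forall>w\<in>W. \<not> holds_at (expand G X A) \<psi> w"
      by blast
    then obtain I where I: "I \<in> cover l r n" "card (W \<inter> layers (mid r I)) > p I"
      using plan_pigeonhole[OF pl] by (metis lessI)
    obtain W' where W': "W' \<subseteq> W \<inter> layers (mid r I)" "card W' = Suc (p I)"
      using obtain_subset_with_card_n I(2) by (metis Suc_leI)
    have sym_I: "symp (adj (expand (Gsub I) X (AI I)))" using symp_adj_Gsub by simp
    have "finite W'" using W' W finite_subset by blast
    moreover have "W' \<subseteq> verts (Gsub I)"
      using W'(1) layers_mono[OF mid_subset_cover_interval[OF I(1), of r]] by (auto simp: verts_Gsub)
    moreover have "scattered (Gsub I) (2 * r') W'"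
      using W'(1) by (intro scattered_Gsub scattered_subset[OF W(4)]) blast
    moreover have "\<forall>w\<in>W'. w \<in> upred (expand (Gsub I) X (AI I)) M \<and> \<not> holds_at (expand (Gsub I) X (AI I)) \<psi> w"
    proof
      fix w assume "w \<in> W'"
      then have w: "w \<in> W" "w \<in> layers (mid r I)" using W'(1) by auto
      have "AI I \<subseteq> A" using AI I(1) by blast
      then have "\<not> holds_at (expand (Gsub I) X (AI I)) \<psi> w"
        using holds_at_Gsub_imp_G[OF b _ I(1) w(2)] W(5) w(1) by auto
      then show "w \<in> upred (expand (Gsub I) X (AI I)) M \<and> \<not> holds_at (expand (Gsub I) X (AI I)) \<psi> w"
        using upred_Gsub_M w(2) by simp
    qed
    moreover have "\<not> (\<exists>W\<subseteq>verts (Gsub I). finite W \<and> card W = Suc (p I) \<and> scattered (Gsub I) (2 * r') W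
        \<and> (\<forall>w\<in>W. w \<in> upred (expand (Gsub I) X (AI I)) M \<and> \<not> holds_at (expand (Gsub I) X (AI I)) \<psi> w))"
      using models_variant_BAll[OF bp sym_I] AI I(1) by fastforce
    ultimately show False using W'(2) by blast
  qed
  have sym: "symp (adj (expand G X A))" using symp_adj by simp
  have iff: "models (expand G X A) (basic_fm (BAll m' r' x \<psi>)) \<longleftrightarrow>
      \<not> (\<exists>W\<subseteq>verts G. finite W \<and> card W = Suc m' \<and> scattered G (2 * r') W
         \<and> (\<forall>w\<in>W. \<not> holds_at (expand G X A) \<psi> w))"
    using models_basic_BAll[OF bp sym] by simp
  show ?thesis using iffD2[OF iff no_W] .
qed

lemma admissible_cover:
  assumes "(R, ps) \<in> admissible Asel l r bs"
  obtains n where "R = cover l r n" "length ps = length bs"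
    "\<forall>k<length bs. plan R (b_spread (bs ! k)) (ps ! k)" "\<forall>I\<in>R. Asel I (map (\<lambda>f. f I) ps) \<noteq> None"
  using assms by (auto simp: admissible_def is_cover_def)

lemma admissible_sound:
  assumes adm: "(R, ps) \<in> admissible Asel l r bs"
  shows "A_Rp Asel R ps \<subseteq> verts G" "models (expand G X (A_Rp Asel R ps)) (bconj_fm bs)"
proof -
  obtain n where R: "R = cover l r n" and len: "length ps = length bs"
    and pl: "\<forall>k<length bs. plan R (b_spread (bs ! k)) (ps ! k)"
    and def: "\<forall>I\<in>R. Asel I (map (\<lambda>f. f I) ps) \<noteq> None"
    using admissible_cover[OF adm] by blast
  define A where "A = A_Rp Asel R ps"
  define AI where "AI I = the (Asel I (map (\<lambda>f. f I) ps))" for I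
  have AI: "AI I \<subseteq> A \<and> AI I \<subseteq> verts (Gsub I)
      \<and> models (expand (Gsub I) X (AI I)) (bconj_variant C M bs (map (\<lambda>f. f I) ps))" if "I \<in> R" for I
    using Asel_cover(2)[of I n "map (\<lambda>f. f I) ps"] def that R len
    unfolding A_def A_Rp_def AI_def by auto
  show "A_Rp Asel R ps \<subseteq> verts G"
    using AI layers_subset unfolding A_def A_Rp_def AI_def verts_Gsub by blast
  have "models (expand G X A) (basic_fm (bs ! k))" if k: "k < length bs" for k
  proof -
    have var: "\<forall>I\<in>R. AI I \<subseteq> A \<and> models (expand (Gsub I) X (AI I)) (variant C M ((ps ! k) I) (bs ! k))"
    proof
      fix I assume "I \<in> R"
      then show "AI I \<subseteq> A \<and> models (expand (Gsub I) X (AI I)) (variant C M ((ps ! k) I) (bs ! k))"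
        using AI[of I] models_bconj_variant[of "map (\<lambda>f. f I) ps" bs] len k by auto
    qed
    have plk: "plan R (b_spread (bs ! k)) (ps ! k)" using pl k by blast
    have inb: "bs ! k \<in> set bs" using k by simp
    show ?thesis
    proof (cases "bs ! k")
      case (BEx m' r' x \<psi>)
      then show ?thesis using sound_BEx[of m' r' x \<psi> n "ps ! k" AI A] inb plk var R by simp
    next
      case (BAll m' r' x \<psi>)
      then show ?thesis using sound_BAll[of m' r' x \<psi> n "ps ! k" AI A] inb plk var R by simp
    qed
  qed
  then show "models (expand G X (A_Rp Asel R ps)) (bconj_fm bs)"
    unfolding models_bconj_fm A_def by (metis in_set_conv_nth)
qed

lemma card_A_Rp_le:
  assumes adm: "(R, ps) \<in> admissible Asel l r bs"
  shows "card (A_Rp Asel R ps) \<le> a_Rp Asel R ps"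
proof -
  obtain n where R: "R = cover l r n" and len: "length ps = length bs"
    and def: "\<forall>I\<in>R. Asel I (map (\<lambda>f. f I) ps) \<noteq> None"
    using admissible_cover[OF adm] by blast
  define AI where "AI I = the (Asel I (map (\<lambda>f. f I) ps))" for I
  have AI_layers: "I \<in> R \<Longrightarrow> AI I \<subseteq> layers I" for I
    using Asel_cover(2)[of I n "map (\<lambda>f. f I) ps"] def R len unfolding AI_def by (simp add: verts_Gsub)
  then have AI_finite: "I \<in> R \<Longrightarrow> finite (AI I)" for I
    using layers_subset finite_verts finite_subset by metis
  define Sp where "Sp = {I \<in> R. card (AI I) \<noteq> 0}"
  have "Sp \<subseteq> {I \<in> cover l r n. \<exists>v\<in>verts G. lam v \<in> I}"
  proof
    fix I assume "I \<in> Sp"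
    then have I: "I \<in> R" "AI I \<noteq> {}" unfolding Sp_def by auto
    then obtain v where "v \<in> AI I" by blast
    then have "v \<in> verts G" "lam v \<in> I" using AI_layers[OF I(1)] by (auto simp: mem_layers)
    then show "I \<in> {I \<in> cover l r n. \<exists>v\<in>verts G. lam v \<in> I}" using I(1) R by blast
  qed
  then have Sp_finite: "finite Sp" using finite_subset finite_cover_meeting[OF finite_verts] by blast
  have "A_Rp Asel R ps \<subseteq> (\<Union>I\<in>Sp. AI I)"
  proof
    fix v assume "v \<in> A_Rp Asel R ps"
    then obtain I where I: "I \<in> R" "v \<in> AI I" unfolding A_Rp_def AI_def by blast
    then have "card (AI I) \<noteq> 0" using AI_finite[OF I(1)] by auto
    then show "v \<in> (\<Union>I\<in>Sp. AI I)" using I Sp_def by blast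
  qed
  then have "A_Rp Asel R ps = (\<Union>I\<in>Sp. AI I)" by (auto simp: A_Rp_def AI_def Sp_def)
  then have "card (A_Rp Asel R ps) \<le> (\<Sum>I\<in>Sp. card (AI I))" using card_UN_le[OF Sp_finite] by simp
  also have "\<dots> = a_Rp Asel R ps" unfolding a_Rp_def Sp_def AI_def ..
  finally show ?thesis .
qed

lemma admissible_empty_if_unsat:
  assumes "\<not> models (expand G X (verts G)) (bconj_fm bs)"
  shows "admissible Asel l r bs = {}"
proof (rule ccontr)
  assume "admissible Asel l r bs \<noteq> {}"
  then obtain R ps where adm: "(R, ps) \<in> admissible Asel l r bs" by auto
  have "xpos X (bconj_fm bs)" using X_pos by (simp add: X_positive_def)
  then have "sat (expand G X (verts G)) \<nu> (bconj_fm bs)" for \<nu>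
    using sat_expand_mono[OF _ admissible_sound(1)[OF adm], of X _ G \<nu>] admissible_sound(2)[OF adm]
    unfolding models_def by blast
  then show False using assms unfolding models_def by blast
qed

section \<open>A cheap admissible choice\<close>

text \<open>Witnesses for one conjunct of an optimal solution D: for a basic existential, the m centres
  it asserts; for a basic universal, a largest 2r-scattered set of points where the core fails,
  which has at most m elements.\<close>

definition witness_set :: "'v set \<Rightarrow> 'p basic \<Rightarrow> 'v set \<Rightarrow> bool" where
  "witness_set D b S \<longleftrightarrow> S \<subseteq> verts G \<and> finite S \<and> card S \<le> b_spread b \<and> scattered G (2 * b_range b) S
     \<and> (\<forall>m' r' x \<psi>. b = BEx m' r' x \<psi> \<longrightarrow> card S = m' \<and> (\<forall>w\<in>S. holds_at (expand G X D) \<psi> w))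
     \<and> (\<forall>m' r' x \<psi>. b = BAll m' r' x \<psi> \<longrightarrow> (\<forall>w\<in>S. \<not> holds_at (expand G X D) \<psi> w)
          \<and> (\<forall>W\<subseteq>verts G. scattered G (2 * r') W \<and> (\<forall>w\<in>W. \<not> holds_at (expand G X D) \<psi> w)
               \<longrightarrow> card W \<le> card S))"

lemma witness_set_exists:
  assumes "b \<in> set bs" "models (expand G X D) (basic_fm b)"
  obtains S where "witness_set D b S"
proof (cases b)
  case (BEx m' r' x \<psi>)
  have bp: "fv \<psi> \<subseteq> {x}" using basic_props[OF assms(1)] BEx by blast
  have sym: "symp (adj (expand G X D))" using symp_adj by simp
  obtain W where "W \<subseteq> verts G" "finite W" "card W = m'" "scattered G (2 * r') W"
    "\<forall>w\<in>W. holds_at (expand G X D) \<psi> w"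
    using models_basic_BEx[OF bp sym] assms(2) BEx by auto
  then show thesis using that[of W] BEx by (auto simp: witness_set_def)
next
  case (BAll m' r' x \<psi>)
  have bp: "fv \<psi> \<subseteq> {x}" using basic_props[OF assms(1)] BAll by blast
  have sym: "symp (adj (expand G X D))" using symp_adj by simp
  define F where "F = {W. W \<subseteq> verts G \<and> scattered G (2 * r') W \<and> (\<forall>w\<in>W. \<not> holds_at (expand G X D) \<psi> w)}"
  have "finite F" unfolding F_def using finite_verts by (simp add: finite_subset)
  moreover have "{} \<in> F" unfolding F_def scattered_def by auto
  ultimately obtain S where S: "S \<in> F" "\<And>W. W \<in> F \<Longrightarrow> card W \<le> card S"
    using Max_in[of "card ` F"] Max_ge[of "card ` F"] by (metis empty_iff finite_imageI image_iff)
  have S_finite: "finite S" using S(1) finite_verts finite_subset unfolding F_def by blast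
  have "card S \<le> m'"
  proof (rule ccontr)
    assume "\<not> card S \<le> m'"
    then obtain S' where S': "S' \<subseteq> S" "card S' = Suc m'"
      using obtain_subset_with_card_n by (metis not_less_eq_eq)
    have "\<exists>W\<subseteq>verts G. finite W \<and> card W = Suc m' \<and> scattered G (2 * r') W
        \<and> (\<forall>w\<in>W. \<not> holds_at (expand G X D) \<psi> w)"
      using S(1) S' S_finite scattered_subset[of G "2 * r'" S S'] finite_subset[of S' S]
      unfolding F_def by (intro exI[of _ S']) auto
    then show False using models_basic_BAll[OF bp sym] assms(2) BAll by auto
  qed
  then show thesis using that[of S] S S_finite BAll unfolding F_def by (auto simp: witness_set_def)
qed

lemma witness_sets_exist:
  assumes "models (expand G X D) (bconj_fm bs)"
  obtains S where "\<forall>k<length bs. witness_set D (bs ! k) (S k)"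
proof -
  have "\<forall>k. \<exists>S. k < length bs \<longrightarrow> witness_set D (bs ! k) S"
  proof (intro allI)
    fix k
    show "\<exists>S. k < length bs \<longrightarrow> witness_set D (bs ! k) S"
    proof (cases "k < length bs")
      case True
      then have "models (expand G X D) (basic_fm (bs ! k))" using assms by (simp add: models_bconj_fm)
      then obtain S where "witness_set D (bs ! k) S" using witness_set_exists True by (meson nth_mem)
      then show ?thesis by blast
    qed simp
  qed
  then obtain S where "\<forall>k. k < length bs \<longrightarrow> witness_set D (bs ! k) (S k)" by (metis choice)
  then show thesis using that by blast
qed

lemma scattered_exchange:
  assumes "scattered G d S" "d \<le> 2 * r" "\<forall>s\<in>S. centred n (lam s)"
    and "I \<in> cover l r n" "T \<subseteq> layers (mid (2 * r) I)" "scattered (Gsub I) d T"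
  shows "scattered G d ((S - layers (mid r I)) \<union> T)"
proof -
  have cross: "\<not> dist_le G d s t" if s: "s \<in> S - layers (mid r I)" and t: "t \<in> T" for s t
  proof
    assume st: "dist_le G d s t"
    then have "\<bar>lam t - lam s\<bar> \<le> 2 * int r"
      using dist_le_layer_bound[OF layering st] assms(2) by linarith
    moreover have "lam t \<in> mid r I"
      using subsetD[OF assms(5) t] mid_antimono[of r "2 * r" I] by (auto simp: mem_layers)
    ultimately have "I = home n (lam s)" using centred_ball_home(1)[OF _ _ assms(4)] assms(3) s by blast
    moreover have "s \<in> verts G" using dist_le_verts[OF st] by blast
    ultimately show False using mem_mid_home s by (auto simp: mem_layers)
  qed
  have inner: "\<not> dist_le G d t t'" if t: "t \<in> T" "t' \<in> T" "t \<noteq> t'" for t t'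
  proof
    assume tt': "dist_le G d t t'"
    have "lam t \<in> mid (2 * r) I" using subsetD[OF assms(5) t(1)] by (simp add: mem_layers)
    then have "dist_le (Gsub I) d t t'"
      using dist_le_G_Gsub[OF tt' cover_mid_layer_ball[OF assms(4) _ assms(2)]] by blast
    then show False using assms(6) t unfolding scattered_def by blast
  qed
  show ?thesis
    unfolding scattered_def
  proof (intro ballI impI)
    fix u w assume "u \<in> (S - layers (mid r I)) \<union> T" "w \<in> (S - layers (mid r I)) \<union> T" "u \<noteq> w"
    then consider "u \<in> S" "w \<in> S" | "u \<in> S - layers (mid r I)" "w \<in> T"
      | "u \<in> T" "w \<in> S - layers (mid r I)" | "u \<in> T" "w \<in> T" by blast
    then show "\<not> dist_le G d u w"
    proof cases
      case 1 then show ?thesis using assms(1) \<open>u \<noteq> w\<close> unfolding scattered_def by blast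
    next
      case 2 then show ?thesis using cross by blast
    next
      case 3 then show ?thesis using cross dist_le_sym[OF symp_adj, of d u w] by blast
    next
      case 4 then show ?thesis using inner \<open>u \<noteq> w\<close> by blast
    qed
  qed
qed

lemma sum_card_layers_eq_depth:
  assumes "finite D" "D \<subseteq> verts G"
  shows "(\<Sum>I\<in>{I \<in> cover l r n. \<exists>v\<in>D. lam v \<in> I}. card (D \<inter> layers I)) = (\<Sum>v\<in>D. depth n (lam v))"
proof -
  define F where "F = {I \<in> cover l r n. \<exists>v\<in>D. lam v \<in> I}"
  have F: "finite F" unfolding F_def by (rule finite_cover_meeting[OF assms(1)])
  have "card (D \<inter> layers I) = (\<Sum>v\<in>D. if lam v \<in> I then 1 else 0)" for I
  proof -
    have "D \<inter> layers I = {v \<in> D. lam v \<in> I}" using assms(2) by (auto simp: mem_layers)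
    then show ?thesis using sum.inter_filter[OF assms(1), of "\<lambda>_. 1::nat"] by simp
  qed
  then have "(\<Sum>I\<in>F. card (D \<inter> layers I)) = (\<Sum>v\<in>D. \<Sum>I\<in>F. if lam v \<in> I then 1 else 0)"
    using sum.swap by simp
  also have "\<dots> = (\<Sum>v\<in>D. depth n (lam v))"
  proof (rule sum.cong[OF refl])
    fix v assume v: "v \<in> D"
    have "(\<Sum>I\<in>F. if lam v \<in> I then 1 else 0) = card {I \<in> F. lam v \<in> I}"
      using sum.inter_filter[OF F, of "\<lambda>_. 1::nat"] by simp
    also have "{I \<in> F. lam v \<in> I} = {I \<in> cover l r n. lam v \<in> I}" using v unfolding F_def by blast
    finally show "(\<Sum>I\<in>F. if lam v \<in> I then 1 else 0) = depth n (lam v)"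
      using card_cover_containing by simp
  qed
  finally show ?thesis unfolding F_def .
qed

end

locale centred_witnesses = approx_setting +
  fixes D and S :: "nat \<Rightarrow> _" and n :: int
  assumes D_subset: "D \<subseteq> verts G"
    and witnesses: "\<forall>k<length bs. witness_set D (bs ! k) (S k)"
    and witnesses_centred: "\<forall>k<length bs. \<forall>c\<in>S k. centred n (lam c)"

begin

text \<open>Each witness is charged to its home interval; the base interval ivl n l takes up the slack
  between the number of witnesses and the spread.\<close>

definition witness_plan :: "nat \<Rightarrow> int set \<Rightarrow> nat" where
  "witness_plan k I = card (S k \<inter> layers (mid r I))
     + (if I = ivl n l then b_spread (bs ! k) - card (S k) else 0)"

lemma witness_mid2:
  assumes "k < length bs" "I \<in> cover l r n"
  shows "S k \<inter> layers (mid r I) \<subseteq> layers (mid (2 * r) I)"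
proof
  fix w assume w: "w \<in> S k \<inter> layers (mid r I)"
  then have "centred n (lam w)" "lam w \<in> mid r I" "w \<in> verts G"
    using witnesses_centred assms(1) by (auto simp: mem_layers)
  then show "w \<in> layers (mid (2 * r) I)"
    using centred_ball_home(2)[of n "lam w" "lam w" I] assms(2) by (simp add: mem_layers)
qed

lemma models_variant_BEx_witness:
  assumes k: "k < length bs" and b: "bs ! k = BEx m' r' x \<psi>" and I: "I \<in> cover l r n"
    and A: "D \<inter> layers I \<subseteq> A"
  shows "models (expand (Gsub I) X A) (variant C M (witness_plan k I) (bs ! k))"
proof -
  have inb: "BEx m' r' x \<psi> \<in> set bs" using k b nth_mem by metis
  have bp: "fv \<psi> \<subseteq> {x}" "r' \<le> r" using basic_props[OF inb] by blast+
  have Sk: "S k \<subseteq> verts G" "finite (S k)" "scattered G (2 * r') (S k)" "card (S k) = m'"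
    "\<forall>w\<in>S k. holds_at (expand G X D) \<psi> w"
    using witnesses k b unfolding witness_set_def by auto
  define W where "W = S k \<inter> layers (mid r I)"
  have "witness_plan k I = card W" unfolding witness_plan_def W_def using Sk(4) b by simp
  moreover have "W \<subseteq> verts (Gsub I)"
    using layers_mono[OF mid_subset_cover_interval[OF I, of r]] unfolding W_def verts_Gsub by blast
  moreover have "finite W" using Sk(2) W_def by simp
  moreover have "scattered (Gsub I) (2 * r') W"
    unfolding W_def by (rule scattered_Gsub, rule scattered_subset[OF Sk(3)]) blast
  moreover have "\<forall>w\<in>W. w \<in> upred (expand (Gsub I) X A) C \<and> holds_at (expand (Gsub I) X A) \<psi> w"
  proof
    fix w assume w: "w \<in> W"
    then have "S k \<noteq> {}" unfolding W_def by blast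
    then have "card (S k) > 0" using Sk(2) by (simp add: card_gt_0_iff)
    then have "m' \<ge> 1" using Sk(4) by simp
    then have "holds_at (expand (Gsub I) X A) \<psi> w"
      using holds_at_G_imp_Gsub[OF inb _ I _ A] Sk(5) w W_def by simp
    moreover have "w \<in> layers (mid (2 * r) I)" using witness_mid2[OF k I] w W_def by blast
    ultimately show "w \<in> upred (expand (Gsub I) X A) C \<and> holds_at (expand (Gsub I) X A) \<psi> w"
      using upred_Gsub_C by simp
  qed
  ultimately have ex: "\<exists>W\<subseteq>verts (expand (Gsub I) X A). finite W \<and> card W = witness_plan k I
      \<and> scattered (expand (Gsub I) X A) (2 * r') W
      \<and> (\<forall>w\<in>W. w \<in> upred (expand (Gsub I) X A) C \<and> holds_at (expand (Gsub I) X A) \<psi> w)"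
    by (intro exI[of _ W]) simp
  have sym: "symp (adj (expand (Gsub I) X A))" using symp_adj_Gsub by simp
  show ?thesis unfolding b by (rule iffD2[OF models_variant_BEx[OF bp(1) sym] ex])
qed

text \<open>A violation of the variant inside I could be swapped into the witness set in place of its
  part in the M_r-part of I, giving a larger scattered set of core failures.\<close>

lemma models_variant_BAll_witness:
  assumes k: "k < length bs" and b: "bs ! k = BAll m' r' x \<psi>" and I: "I \<in> cover l r n"
    and A: "D \<inter> layers I \<subseteq> A"
  shows "models (expand (Gsub I) X A) (variant C M (witness_plan k I) (bs ! k))"
proof -
  have inb: "BAll m' r' x \<psi> \<in> set bs" using k b nth_mem by metis
  have bp: "fv \<psi> \<subseteq> {x}" "r' \<le> r" using basic_props[OF inb] by blast+
  define B where "B = layers (mid r I)"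
  have Sk: "S k \<subseteq> verts G" "finite (S k)" "scattered G (2 * r') (S k)"
    "\<forall>w\<in>S k. \<not> holds_at (expand G X D) \<psi> w"
    "\<forall>W\<subseteq>verts G. scattered G (2 * r') W \<and> (\<forall>w\<in>W. \<not> holds_at (expand G X D) \<psi> w)
       \<longrightarrow> card W \<le> card (S k)"
    using witnesses k b unfolding witness_set_def by auto
  have no_T: "\<not> (\<exists>T\<subseteq>verts (Gsub I). finite T \<and> card T = Suc (witness_plan k I)
      \<and> scattered (Gsub I) (2 * r') T \<and> (\<forall>t\<in>T. t \<in> B \<and> \<not> holds_at (expand (Gsub I) X A) \<psi> t))"
  proof
    assume "\<exists>T\<subseteq>verts (Gsub I). finite T \<and> card T = Suc (witness_plan k I)
      \<and> scattered (Gsub I) (2 * r') T \<and> (\<forall>t\<in>T. t \<in> B \<and> \<not> holds_at (expand (Gsub I) X A) \<psi> t)"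
    then obtain T where T: "finite T" "card T = Suc (witness_plan k I)" "scattered (Gsub I) (2 * r') T"
      "\<forall>t\<in>T. t \<in> B \<and> \<not> holds_at (expand (Gsub I) X A) \<psi> t"
      by blast
    have T_bad: "\<not> holds_at (expand G X D) \<psi> t" if "t \<in> T" for t
      using holds_at_G_imp_Gsub[OF inb _ I _ A] T(4) that B_def by auto
    have T_mid2: "T \<subseteq> layers (mid (2 * r) I)"
    proof
      fix t assume t: "t \<in> T"
      then have t': "t \<in> verts G" "lam t \<in> mid r I" using T(4) B_def by (auto simp: mem_layers)
      obtain s where s: "s \<in> S k" "dist_le G (2 * r') s t"
        using maximum_scattered_near[OF symp_adj Sk(2,1,3,4,5) t'(1) T_bad[OF t]] by blast
      have "\<bar>lam t - lam s\<bar> \<le> 2 * int r"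
        using dist_le_layer_bound[OF layering s(2)] bp(2) by linarith
      then have "lam t \<in> mid (2 * r) I"
        using centred_ball_home(2)[OF _ _ I t'(2)] witnesses_centred k s(1) by blast
      then show "t \<in> layers (mid (2 * r) I)" using t'(1) by (simp add: mem_layers)
    qed
    define S' where "S' = (S k - B) \<union> T"
    have "scattered G (2 * r') S'"
      unfolding S'_def B_def
      by (rule scattered_exchange[OF Sk(3) _ _ I T_mid2 T(3)]) (use bp witnesses_centred k in auto)
    moreover have "S' \<subseteq> verts G"
      using Sk(1) T_mid2 layers_subset unfolding S'_def by blast
    moreover have "\<forall>w\<in>S'. \<not> holds_at (expand G X D) \<psi> w" using Sk(4) T_bad unfolding S'_def by blast
    ultimately have "card S' \<le> card (S k)" using Sk(5) by blast
    moreover have "card S' = card (S k - B) + card T"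
      unfolding S'_def by (rule card_Un_disjoint) (use Sk(2) T(1,4) in auto)
    moreover have "card (S k - B) + card (S k \<inter> B) = card (S k)"
      using card_Diff_subset_Int[of "S k" B] card_mono[of "S k" "S k \<inter> B"] Sk(2) by simp
    moreover have "card (S k \<inter> B) \<le> witness_plan k I" unfolding witness_plan_def B_def by simp
    ultimately show False using T(2) by linarith
  qed
  have sym: "symp (adj (expand (Gsub I) X A))" using symp_adj_Gsub by simp
  have "models (expand (Gsub I) X A) (variant C M (witness_plan k I) (BAll m' r' x \<psi>))"
    using no_T models_variant_BAll[OF bp(1) sym] upred_Gsub_M unfolding B_def by simp
  then show ?thesis using b by simp
qed

lemma plan_witness_plan:
  assumes k: "k < length bs"
  shows "plan (cover l r n) (b_spread (bs ! k)) (witness_plan k)"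
proof -
  have Sk: "S k \<subseteq> verts G" "finite (S k)" "card (S k) \<le> b_spread (bs ! k)"
    using witnesses k unfolding witness_set_def by auto
  define F where "F = insert (ivl n l) ((\<lambda>v. home n (lam v)) ` S k)"
  have F: "finite F" "F \<subseteq> cover l r n"
    unfolding F_def using Sk(2) home_in_cover mem_cover by auto
  have supp: "{I \<in> cover l r n. witness_plan k I \<noteq> 0} \<subseteq> F"
  proof
    fix I assume I: "I \<in> {I \<in> cover l r n. witness_plan k I \<noteq> 0}"
    show "I \<in> F"
    proof (cases "I = ivl n l")
      case False
      then have "S k \<inter> layers (mid r I) \<noteq> {}" using I by (auto simp: witness_plan_def)
      then obtain v where "v \<in> S k" "lam v \<in> mid r I" by (auto simp: mem_layers)
      then show ?thesis using cover_mid_eq_home I unfolding F_def by blast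
    qed (simp add: F_def)
  qed
  have "(\<Sum>I\<in>{I \<in> cover l r n. witness_plan k I \<noteq> 0}. witness_plan k I) = (\<Sum>I\<in>F. witness_plan k I)"
    by (rule sum.mono_neutral_left[OF F(1) supp]) (use F(2) in auto)
  also have "\<dots> = (\<Sum>I\<in>F. card (S k \<inter> layers (mid r I))) + (b_spread (bs ! k) - card (S k))"
    using F(1) by (simp add: witness_plan_def sum.distrib F_def)
  also have "(\<Sum>I\<in>F. card (S k \<inter> layers (mid r I))) = card (S k)"
    by (rule card_eq_sum_mid_layers[OF Sk(2,1) F, symmetric]) (simp add: F_def)
  finally show ?thesis
    unfolding plan_def using Sk(3) finite_subset[OF supp F(1)] by simp
qed

definition witness_plans :: "(int set \<Rightarrow> nat) list" where
  "witness_plans = map witness_plan [0..<length bs]"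

lemma models_witness_variant:
  assumes I: "I \<in> cover l r n" and A: "D \<inter> layers I \<subseteq> A"
  shows "models (expand (Gsub I) X A) (bconj_variant C M bs (map (\<lambda>f. f I) witness_plans))"
proof -
  have "models (expand (Gsub I) X A) (variant C M (witness_plan k I) (bs ! k))" if k: "k < length bs" for k
  proof (cases "bs ! k")
    case (BEx m' r' x \<psi>)
    then show ?thesis using models_variant_BEx_witness[OF k _ I A] by blast
  next
    case (BAll m' r' x \<psi>)
    then show ?thesis using models_variant_BAll_witness[OF k _ I A] by blast
  qed
  then show ?thesis
    by (subst models_bconj_variant) (simp_all add: witness_plans_def)
qed

lemma Asel_witness_plans:
  assumes I: "I \<in> cover l r n"
  shows "Asel I (map (\<lambda>f. f I) witness_plans) \<noteq> None"
proof -
  have "models (expand (Gsub I) X (verts (Gsub I))) (bconj_variant C M bs (map (\<lambda>f. f I) witness_plans))"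
    by (rule models_witness_variant[OF I]) (simp add: verts_Gsub)
  then show ?thesis using Asel_cover(1)[OF I] by (simp add: witness_plans_def)
qed

lemma admissible_witness_plans: "(cover l r n, witness_plans) \<in> admissible Asel l r bs"
  unfolding admissible_def is_cover_def
  using plan_witness_plan Asel_witness_plans by (auto simp: witness_plans_def)

lemma card_Asel_witness_le:
  assumes I: "I \<in> cover l r n"
  shows "real (card (the (Asel I (map (\<lambda>f. f I) witness_plans)))) \<le> (1 + \<epsilon>1) * real (card (D \<inter> layers I))"
proof -
  let ?\<theta> = "bconj_variant C M bs (map (\<lambda>f. f I) witness_plans)"
  have "gamma (Gsub I) X ?\<theta> \<le> card (D \<inter> layers I)"
    by (rule gamma_le_card) (simp_all add: verts_Gsub models_witness_variant[OF I])
  then have "(1 + \<epsilon>1) * real (gamma (Gsub I) X ?\<theta>) \<le> (1 + \<epsilon>1) * real (card (D \<inter> layers I))"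
    using eps1_pos by (intro mult_left_mono) auto
  moreover have "real (card (the (Asel I (map (\<lambda>f. f I) witness_plans)))) \<le> (1 + \<epsilon>1) * real (gamma (Gsub I) X ?\<theta>)"
    using Asel_cover(2)[OF I _ Asel_witness_plans[OF I]] by (simp add: witness_plans_def)
  ultimately show ?thesis by linarith
qed

lemma a_Rp_witness_plans_le:
  "real (a_Rp Asel (cover l r n) witness_plans) \<le> (1 + \<epsilon>1) * real (\<Sum>v\<in>D. depth n (lam v))"
proof -
  define AI where "AI I = the (Asel I (map (\<lambda>f. f I) witness_plans))" for I
  define F where "F = {I \<in> cover l r n. \<exists>v\<in>D. lam v \<in> I}"
  have D_finite: "finite D" using D_subset finite_verts finite_subset by blast
  have F: "finite F" unfolding F_def by (rule finite_cover_meeting[OF D_finite])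
  have AI_le: "I \<in> cover l r n \<Longrightarrow> real (card (AI I)) \<le> (1 + \<epsilon>1) * real (card (D \<inter> layers I))" for I
    using card_Asel_witness_le unfolding AI_def by blast
  have supp: "{I \<in> cover l r n. card (AI I) \<noteq> 0} \<subseteq> F"
  proof
    fix I assume "I \<in> {I \<in> cover l r n. card (AI I) \<noteq> 0}"
    then have I: "I \<in> cover l r n" "card (AI I) \<noteq> 0" by auto
    have "card (D \<inter> layers I) \<noteq> 0"
    proof
      assume "card (D \<inter> layers I) = 0"
      then show False using AI_le[OF I(1)] I(2) by simp
    qed
    then have "D \<inter> layers I \<noteq> {}" by (metis card.empty)
    then obtain v where "v \<in> D" "lam v \<in> I" by (auto simp: mem_layers)
    then show "I \<in> F" using I(1) unfolding F_def by blast
  qed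
  have "a_Rp Asel (cover l r n) witness_plans = (\<Sum>I\<in>F. card (AI I))"
    unfolding a_Rp_def AI_def[symmetric]
    by (rule sum.mono_neutral_left[OF F supp]) (auto simp: F_def)
  then have "real (a_Rp Asel (cover l r n) witness_plans) = (\<Sum>I\<in>F. real (card (AI I)))" by simp
  also have "\<dots> \<le> (\<Sum>I\<in>F. (1 + \<epsilon>1) * real (card (D \<inter> layers I)))"
    using AI_le by (intro sum_mono) (auto simp: F_def)
  also have "\<dots> = (1 + \<epsilon>1) * real (\<Sum>I\<in>F. card (D \<inter> layers I))"
    by (simp add: sum_distrib_left)
  also have "(\<Sum>I\<in>F. card (D \<inter> layers I)) = (\<Sum>v\<in>D. depth n (lam v))"
    using sum_card_layers_eq_depth[OF D_finite D_subset] unfolding F_def .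
  finally show ?thesis .
qed

end

context approx_setting
begin

lemma exists_cheap_admissible:
  fixes \<epsilon>2 :: real
  assumes "\<epsilon>2 > 0" "\<forall>b\<in>set bs. b_spread b \<le> m"
    and "real_of_int l > 2 * real r * (1 + max (2 / \<epsilon>2) (6 * real m * real (length bs)))"
    and "models (expand G X (verts G)) (bconj_fm bs)"
  obtains R ps where "(R, ps) \<in> admissible Asel l r bs"
    "real (a_Rp Asel R ps) \<le> (1 + \<epsilon>1) * (1 + \<epsilon>2) * real (gamma G X (bconj_fm bs))"
proof -
  obtain D where D: "D \<subseteq> verts G" "card D = gamma G X (bconj_fm bs)" "models (expand G X D) (bconj_fm bs)"
    using gamma_witness[OF assms(4)] by blast
  have D_finite: "finite D" using D(1) finite_verts finite_subset by blast
  obtain S where S: "\<forall>k<length bs. witness_set D (bs ! k) (S k)" using witness_sets_exist[OF D(3)] by blast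
  define Z where "Z = (\<Union>k<length bs. S k)"
  have S_small: "finite (S k) \<and> card (S k) \<le> m" if "k < length bs" for k
  proof -
    have "witness_set D (bs ! k) (S k)" "b_spread (bs ! k) \<le> m" using S assms(2) that by auto
    then show ?thesis unfolding witness_set_def by auto
  qed
  then have Z_finite: "finite Z" unfolding Z_def by auto
  have "card Z \<le> (\<Sum>k<length bs. card (S k))" unfolding Z_def by (rule card_UN_le) simp
  also have "\<dots> \<le> m * length bs"
    using S_small sum_mono[of "{..<length bs}" "\<lambda>k. card (S k)" "\<lambda>_. m"] by (simp add: mult.commute)
  finally have Z_card: "card Z \<le> m * length bs" .
  define Good where "Good = {n \<in> {0..<period}. \<forall>c\<in>Z. centred n (lam c)}"
  have Good_sub: "Good \<subseteq> {0..<period}" unfolding Good_def by auto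
  have "{0..<period} - Good = {n \<in> {0..<period}. \<exists>c\<in>Z. \<not> centred n (lam c)}"
    unfolding Good_def by auto
  then have "card ({0..<period} - Good) \<le> 6 * r * (m * length bs)"
    using card_not_centred_some[OF Z_finite, of lam] Z_card by (metis le_trans mult_le_mono2)
  then have Good_big: "real (card Good) * \<epsilon>2 \<ge> 2 * real r" "Good \<noteq> {}"
    using enough_centred_residues[OF assms(1) Good_sub] assms(3) by (simp_all add: mult.assoc)
  obtain n where n: "n \<in> Good" "real (\<Sum>v\<in>D. depth n (lam v)) \<le> (1 + \<epsilon>2) * real (card D)"
    using exists_cheap_residue[OF assms(1) D_finite Good_sub Good_big] by blast
  interpret centred_witnesses l r L X C M bs G lam Asel \<epsilon>1 D S n
    using D(1) S n(1) unfolding Good_def Z_def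
    by unfold_locales auto
  have "real (a_Rp Asel (cover l r n) witness_plans) \<le> (1 + \<epsilon>1) * real (\<Sum>v\<in>D. depth n (lam v))"
    by (rule a_Rp_witness_plans_le)
  also have "\<dots> \<le> (1 + \<epsilon>1) * ((1 + \<epsilon>2) * real (card D))"
    using n(2) eps1_pos by (intro mult_left_mono) auto
  finally show thesis
    using that[OF admissible_witness_plans] D(2) by (simp add: mult.assoc)
qed

lemma minimal_admissible_approximates:
  assumes "(R, ps) \<in> admissible Asel l r bs"
    and "\<forall>(R', ps')\<in>admissible Asel l r bs. a_Rp Asel R ps \<le> a_Rp Asel R' ps'"
    and "(R0, ps0) \<in> admissible Asel l r bs" "real (a_Rp Asel R0 ps0) \<le> B"
  shows "models (expand G X (A_Rp Asel R ps)) (bconj_fm bs)" "real (card (A_Rp Asel R ps)) \<le> B"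
proof -
  show "models (expand G X (A_Rp Asel R ps)) (bconj_fm bs)" by (rule admissible_sound(2)[OF assms(1)])
  have "card (A_Rp Asel R ps) \<le> a_Rp Asel R0 ps0"
    using card_A_Rp_le[OF assms(1)] assms(2,3) by fastforce
  then show "real (card (A_Rp Asel R ps)) \<le> B" using assms(4) by linarith
qed

end

lemma foldr_max_ge: "x \<in> set xs \<Longrightarrow> f x \<le> foldr max (map f xs) (0::nat)"
  by (induction xs) auto

theorem mainTheorem15:
  fixes L :: "'p set" and X C M :: 'p and bs :: "'p basic list"
    and m r t :: nat and \<epsilon>1 \<epsilon>2 :: real
    and G :: "('v, 'p) interp" and lam :: "'v \<Rightarrow> int"
    and Asel :: "int set \<Rightarrow> nat list \<Rightarrow> 'v set option" and l :: int
  assumes "finite L" and "X \<notin> L"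
    and "\<forall>b\<in>set bs. wf_basic b"
    and "preds (bconj_fm bs) \<subseteq> L \<union> {X}"
    and "X_positive X (bconj_fm bs)"
    and "m = bconj_spread bs" and "r = bconj_range bs" and "t = length bs"
    and "C \<notin> L \<union> {X}" and "M \<notin> L \<union> {X}" and "C \<noteq> M"
    and "\<epsilon>1 > 0" and "\<epsilon>2 > 0"
    and "L_interp L G" and "layering G lam"
    and "\<forall>a b q. a \<le> b \<longrightarrow> length q = t \<longrightarrow>
           (let H = G_sub G lam r C M {a..b}; \<theta> = bconj_variant C M bs q in
             (\<not> models (expand H X (verts H)) \<theta> \<longrightarrow> Asel {a..b} q = None) \<and>
             (models (expand H X (verts H)) \<theta> \<longrightarrow>
                (\<exists>A. Asel {a..b} q = Some A \<and> A \<subseteq> verts H \<and> models (expand H X A) \<theta>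
                     \<and> real (card A) \<le> (1 + \<epsilon>1) * real (gamma H X \<theta>))))"
    and "real_of_int l > 2 * real r * (1 + max (2 / \<epsilon>2) (6 * real m * real t))"
  shows "(\<not> models (expand G X (verts G)) (bconj_fm bs) \<and> admissible Asel l r bs = {})
       \<or> (admissible Asel l r bs \<noteq> {} \<and>
          (\<forall>(R, ps)\<in>admissible Asel l r bs.
             (\<forall>(R', ps')\<in>admissible Asel l r bs. a_Rp Asel R ps \<le> a_Rp Asel R' ps') \<longrightarrow>
               models (expand G X (A_Rp Asel R ps)) (bconj_fm bs)
               \<and> real (card (A_Rp Asel R ps))
                   \<le> (1 + \<epsilon>1) * (1 + \<epsilon>2) * real (gamma G X (bconj_fm bs))))"
proof -
  have "0 \<le> max (2 / \<epsilon>2) (6 * real m * real t)" using \<open>\<epsilon>2 > 0\<close> by (simp add: le_max_iff_disj)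
  then have "2 * real r * 1 \<le> 2 * real r * (1 + max (2 / \<epsilon>2) (6 * real m * real t))"
    by (intro mult_left_mono) auto
  then have "2 * int r < l" using assms(17) by linarith
  moreover have "\<forall>b\<in>set bs. b_range b \<le> r" "\<forall>b\<in>set bs. b_spread b \<le> m"
    using foldr_max_ge assms(6,7) by (auto simp: bconj_range_def bconj_spread_def)
  moreover have "\<forall>a b q. a \<le> b \<longrightarrow> length q = length bs \<longrightarrow>
           (let H = G_sub G lam r C M {a..b}; \<theta> = bconj_variant C M bs q in
             (\<not> models (expand H X (verts H)) \<theta> \<longrightarrow> Asel {a..b} q = None) \<and>
             (models (expand H X (verts H)) \<theta> \<longrightarrow>
                (\<exists>A. Asel {a..b} q = Some A \<and> A \<subseteq> verts H \<and> models (expand H X A) \<theta>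
                     \<and> real (card A) \<le> (1 + \<epsilon>1) * real (gamma H X \<theta>))))"
    using assms(8,16) by simp
  ultimately interpret approx_setting l r L X C M bs G lam Asel \<epsilon>1
    by (intro approx_setting.intro int_cover.intro approx_setting_axioms.intro) (use assms in auto)
  show ?thesis
  proof (cases "models (expand G X (verts G)) (bconj_fm bs)")
    case True
    then obtain R0 ps0 where cheap: "(R0, ps0) \<in> admissible Asel l r bs"
      "real (a_Rp Asel R0 ps0) \<le> (1 + \<epsilon>1) * (1 + \<epsilon>2) * real (gamma G X (bconj_fm bs))"
      using exists_cheap_admissible[OF \<open>\<epsilon>2 > 0\<close> _ assms(17)[unfolded assms(8)]] \<open>\<forall>b\<in>set bs. b_spread b \<le> m\<close>
      by blast
    have "models (expand G X (A_Rp Asel R ps)) (bconj_fm bs)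
        \<and> real (card (A_Rp Asel R ps)) \<le> (1 + \<epsilon>1) * (1 + \<epsilon>2) * real (gamma G X (bconj_fm bs))"
      if "(R, ps) \<in> admissible Asel l r bs"
        "\<forall>(R', ps')\<in>admissible Asel l r bs. a_Rp Asel R ps \<le> a_Rp Asel R' ps'" for R ps
      using minimal_admissible_approximates[OF that cheap] by blast
    then show ?thesis using cheap(1) by blast
  qed (simp add: admissible_empty_if_unsat)
qed

end
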